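(* For all positive integers $s,t$ there exist a positive real $\beta_{s,t}$ and an integer $N_{s,t}$ such that for all $n\ge N_{s,t}$ and every valid quadruple $(\mathbf{x},\mathbf{k},\mathbf{y},\boldsymbol{\ell})$ with $\mathbf{x}$ of length $s$ and $\mathbf{y}$ of length $t$, $$\Pr[A(\mathbf{x},\mathbf{k},\mathbf{y},\boldsymbol{\ell})]\le \beta_{s,t}\,n^3\prod_{i\in S}f_i^{-3/2}\prod_{j\in T}g_j^{-3/2},$$ where $S=\{0\le i\le s: f_i\ge 16(s+t)\log n\}$ and $T=\{0\le j\le t: g_j\ge 16(s+t)\log n\}$.
   Context: The random Catalan-pair graph $CP_n$: points $1,\dots,2n$ on a line; each of $1,\dots,2n-1$ is colored red/blue independently and uniformly, and $2n$ is colored so that the number of red points is even; then a uniformly random non-crossing perfect matching (Catalan-arc matching: no $a<b<c<d$ with $\{a,c\},\{b,d\}$ both arcs) is placed independently on the red points and on the blue points; vertices are arcs, adjacent iff their endpoints alternate. Points $a<b$ match if they have the same color and are joined by an arc. Let $\mathbf{x}=(x_1<\dots<x_s)$, $\mathbf{k}=(k_1,\dots,k_s)$, $\mathbf{y}=(y_1<\dots<y_t)$, $\boldsymbol\ell=(\ell_1,\dots,\ell_t)$ be tuples of positive integers with $1\le x_i<x_i+k_i\le2n$ and $1\le y_j<y_j+\ell_j\le 2n$. The quadruple is valid if there exist a coloring of $1,\dots,2n$ with an even number of red points and Catalan-arc matchings on the red and blue points such that every $x_i,x_i+k_i$ is red and $x_i$ is matched to $x_i+k_i$, and every $y_j,y_j+\ell_j$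 is blue and $y_j$ is matched to $y_j+\ell_j$. $A(\mathbf{x},\mathbf{k},\mathbf{y},\boldsymbol\ell)$ is the event that in $CP_n$: all $x_i,x_i+k_i$ are red and all $y_j,y_j+\ell_j$ are blue; for each $i$ the number of red points strictly between $x_i$ and $x_i+k_i$ is even and for each $j$ the number of blue points strictly between $y_j$ and $y_j+\ell_j$ is even; and $(x_i,x_i+k_i)$ and $(y_j,y_j+\ell_j)$ match for all $i,j$. For $1\le i\le s$, $f_i$ is the number of points $x$ with $x_i<x<x_i+k_i$ that do not lie in any interval $[x_{i'},x_{i'}+k_{i'}]$ with $i'\ne i$ nested inside $[x_i,x_i+k_i]$, and are not of the form $y_j$ or $y_j+\ell_j$; $f_0$ is the number of $x\in\{1,\dots,2n\}$ lying in no interval $[x_i,x_i+k_i]$ and not of the form $y_j$ or $y_j+\ell_j$. $g_0,\dots,g_t$ are defined symmetrically with the roles of $(\mathbf{x},\mathbf{k})$ and $(\mathbf{y},\boldsymbol\ell)$ exchanged. *)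

theory Defs
  imports "HOL-Probability.Probability"
begin

text \<open>Points are 1..2n. A configuration is (R, Mr, Mb): R is the set of red points,
  Mr the arcs on red points, Mb the arcs on blue points. An arc is a pair (a,b) with a<b.\<close>

type_synonym config = "nat set \<times> (nat \<times> nat) set \<times> (nat \<times> nat) set"

definition matched :: "(nat \<times> nat) set \<Rightarrow> nat \<Rightarrow> nat \<Rightarrow> bool" where
  "matched M p q \<longleftrightarrow> (p, q) \<in> M \<or> (q, p) \<in> M"

definition perfect_matching_on :: "nat set \<Rightarrow> (nat \<times> nat) set \<Rightarrow> bool" where
  "perfect_matching_on P M \<longleftrightarrow>
     M \<subseteq> {(a, b). a \<in> P \<and> b \<in> P \<and> a < b} \<and> (\<forall>p\<in>P. \<exists>!q. matched M p q)"

definition noncrossing :: "(nat \<times> nat) set \<Rightarrow> bool" where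
  "noncrossing M \<longleftrightarrow> \<not> (\<exists>a b c d. a < b \<and> b < c \<and> c < d \<and> (a, c) \<in> M \<and> (b, d) \<in> M)"

definition catalan_matchings :: "nat set \<Rightarrow> (nat \<times> nat) set set" where
  "catalan_matchings P = {M. perfect_matching_on P M \<and> noncrossing M}"

text \<open>The random Catalan-pair graph CP_n (as a random configuration): points 1..2n-1 are
  coloured independently uniformly (red set C uniform in the powerset of {1..<2n}); point 2n is
  red iff this makes the number of red points even; then independent uniform Catalan-arc
  matchings on red and on blue points.\<close>
definition CP :: "nat \<Rightarrow> config pmf" where
  "CP n = do {
     C \<leftarrow> pmf_of_set (Pow {1..<2*n});
     let R = (if even (card C) then C else insert (2*n) C);
     Mr \<leftarrow> pmf_of_set (catalan_matchings R);
     Mb \<leftarrow> pmf_of_set (catalan_matchings ({1..2*n} - R));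
     return_pmf (R, Mr, Mb) }"

text \<open>Tuples: x, k, y, l are lists; index i (0-based) of a list corresponds to index i+1 in the paper.\<close>

definition valid_quad :: "nat \<Rightarrow> nat list \<Rightarrow> nat list \<Rightarrow> nat list \<Rightarrow> nat list \<Rightarrow> bool" where
  "valid_quad n x k y l \<longleftrightarrow>
     (\<exists>R Mr Mb. R \<subseteq> {1..2*n} \<and> even (card R) \<and>
        Mr \<in> catalan_matchings R \<and> Mb \<in> catalan_matchings ({1..2*n} - R) \<and>
        (\<forall>i<length x. x!i \<in> R \<and> x!i + k!i \<in> R \<and> (x!i, x!i + k!i) \<in> Mr) \<and>
        (\<forall>j<length y. y!j \<in> {1..2*n} - R \<and> y!j + l!j \<in> {1..2*n} - R \<and> (y!j, y!j + l!j) \<in> Mb))"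

definition event_A :: "nat \<Rightarrow> nat list \<Rightarrow> nat list \<Rightarrow> nat list \<Rightarrow> nat list \<Rightarrow> config set" where
  "event_A n x k y l = {(R, Mr, Mb).
     (\<forall>i<length x. x!i \<in> R \<and> x!i + k!i \<in> R \<and>
         even (card {p \<in> R. x!i < p \<and> p < x!i + k!i}) \<and> (x!i, x!i + k!i) \<in> Mr) \<and>
     (\<forall>j<length y. y!j \<in> {1..2*n} - R \<and> y!j + l!j \<in> {1..2*n} - R \<and>
         even (card {p \<in> {1..2*n} - R. y!j < p \<and> p < y!j + l!j}) \<and> (y!j, y!j + l!j) \<in> Mb)}"

text \<open>free_count n x k y l 0 = f_0, and free_count n x k y l (Suc i) = f_(i+1)
  (the paper's f_(i+1), i.e. for the 0-based list index i). The g's are obtained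
  by swapping the roles of (x,k) and (y,l).\<close>
fun free_count :: "nat \<Rightarrow> nat list \<Rightarrow> nat list \<Rightarrow> nat list \<Rightarrow> nat list \<Rightarrow> nat \<Rightarrow> nat" where
  "free_count n x k y l 0 =
     card {p \<in> {1..2*n}. (\<forall>i<length x. \<not> (x!i \<le> p \<and> p \<le> x!i + k!i)) \<and>
                         (\<forall>j<length y. p \<noteq> y!j \<and> p \<noteq> y!j + l!j)}"
| "free_count n x k y l (Suc i) =
     card {p. x!i < p \<and> p < x!i + k!i \<and>
        (\<forall>i'<length x. i' \<noteq> i \<and> x!i \<le> x!i' \<and> x!i' + k!i' \<le> x!i + k!i
                \<longrightarrow> \<not> (x!i' \<le> p \<and> p \<le> x!i' + k!i')) \<and>
        (\<forall>j<length y. p \<noteq> y!j \<and> p \<noteq> y!j + l!j)}"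

end

(*
  Given the colouring, the red matching is uniform among the non-crossing matchings of the red
  points, and one containing the prescribed red arcs is determined by its restrictions to the
  regions cut out by those arcs, which are again non-crossing matchings. Since Catalan numbers
  satisfy C_q ~ 4^q q^(-3/2), the conditional probability of the red arcs is at most about
  n^(3/2) times the product of r_i^(-3/2) over the numbers r_i of red points in the regions, and
  likewise for blue. A region with f_i >= 16 (s + t) log n free points receives at least f_i / 16
  red (resp. blue) points except with probability O(n^(-2 (s + t))), by a Chernoff-type count of
  colourings; these failures are absorbed by n^3 times the product of the f_i^(-3/2), each factor
  being at least (2n)^(-3/2).
*)
theory Submission
  imports Defs
begin

section \<open>Ballot numbers and bounds on Catalan numbers\<close>

text \<open>\<open>ballot u h\<close> counts the \<open>\<plusminus>1\<close> lattice paths of length \<open>u\<close> from height \<open>h\<close> down to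
  height \<open>0\<close> that never go below \<open>0\<close>; \<open>ballot (2 * a) 0\<close> is the Catalan number.\<close>
fun ballot :: "nat \<Rightarrow> nat \<Rightarrow> nat" where
  "ballot 0 h = (if h = 0 then 1 else 0)"
| "ballot (Suc u) h = (if h > 0 then ballot u (h - 1) else 0) + ballot u (Suc h)"

definition int_choose :: "nat \<Rightarrow> int \<Rightarrow> int" where
  "int_choose u j = (if j < 0 then 0 else int (u choose nat j))"

lemma int_choose_Suc: "int_choose (Suc u) j = int_choose u j + int_choose u (j - 1)"
proof (cases "j \<le> 0")
  case True
  then show ?thesis by (cases "j = 0") (auto simp: int_choose_def)
next
  case False
  then have "nat j = Suc (nat (j - 1))" by auto
  then show ?thesis using False by (simp add: int_choose_def)
qed

lemma ballot_odd: "odd (u + h) \<Longrightarrow> ballot u h = 0"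
  by (induction u arbitrary: h) (auto simp: odd_pos split: nat.split)

text \<open>The reflection principle in closed form.\<close>
lemma ballot_eq_choose_diff:
  "even (u + h) \<Longrightarrow> int (ballot u h) = int_choose u ((int u - int h) div 2) - int_choose u ((int u - int h) div 2 - 1)"
proof (induction u arbitrary: h)
  case 0
  then show ?case
  proof (cases "h = 0")
    case True then show ?thesis by (simp add: int_choose_def)
  next
    case False
    then have "(0 - int h) div 2 < 0" by auto
    then show ?thesis using False by (simp add: int_choose_def)
  qed
next
  case (Suc u)
  define j where "j = (int (Suc u) - int h) div 2"
  show ?case
  proof (cases "h > 0")
    case True
    have e1: "even (u + (h - 1))" using Suc.prems True by (cases h) auto
    have e2: "even (u + Suc h)" using Suc.prems by auto
    have j1: "(int u - int (h - 1)) div 2 = j" using True j_def by (simp add: of_nat_diff)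
    have j2: "(int u - int (Suc h)) div 2 = j - 1"
    proof -
      have "int u - int (Suc h) = (int (Suc u) - int h) + (-1) * 2" by simp
      then show ?thesis unfolding j_def by (simp only: div_mult_self1)
    qed
    have "int (ballot (Suc u) h) = int (ballot u (h - 1)) + int (ballot u (Suc h))" using True by simp
    also have "\<dots> = int_choose u j - int_choose u (j - 1) + (int_choose u (j - 1) - int_choose u (j - 1 - 1))"
      using Suc.IH[OF e1] Suc.IH[OF e2] j1 j2 by simp
    also have "\<dots> = int_choose (Suc u) j - int_choose (Suc u) (j - 1)" by (simp add: int_choose_Suc)
    finally show ?thesis using j_def by simp
  next
    case False
    then have h0: "h = 0" by auto
    then have odd: "odd u" using Suc.prems by auto
    then obtain c where c: "u = 2 * c + 1" by (metis oddE)
    have jc: "j = int c + 1" using j_def h0 c by simp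
    have IH: "int (ballot u 1) = int_choose u (int c) - int_choose u (int c - 1)"
      using Suc.IH[of 1] odd c by simp
    have sym: "int_choose u (int c + 1) = int_choose u (int c)"
    proof -
      have "u choose (c+1) = u choose (u - (c+1))" using c by (subst binomial_symmetric) auto
      also have "u - (c+1) = c" using c by auto
      finally show ?thesis by (simp add: int_choose_def nat_add_distrib)
    qed
    have "int (ballot (Suc u) h) = int (ballot u 1)" using h0 by simp
    also have "\<dots> = int_choose u (int c) - int_choose u (int c - 1)" by (rule IH)
    also have "\<dots> = int_choose u j + int_choose u (j - 1) - (int_choose u (j - 1) + int_choose u (j - 1 - 1))"
      using sym jc by simp
    also have "\<dots> = int_choose (Suc u) j - int_choose (Suc u) (j - 1)" by (simp add: int_choose_Suc)
    finally show ?thesis using j_def h0 by simp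
  qed
qed

lemma ballot_catalan: "real (ballot (2 * a) 0) = real (2 * a choose a) / (real a + 1)"
proof (cases a)
  case 0 then show ?thesis by simp
next
  case (Suc c)
  have "int (ballot (2*a) 0) = int_choose (2*a) (int a) - int_choose (2*a) (int a - 1)"
    using ballot_eq_choose_diff[of "2*a" 0] by simp
  also have "\<dots> = int (2*a choose a) - int (2*a choose c)" using Suc by (simp add: int_choose_def nat_add_distrib del: binomial_Suc_Suc)
  finally have e: "real (ballot (2*a) 0) = real (2*a choose a) - real (2*a choose c)"
    by (metis of_int_diff of_int_of_nat_eq)
  have k: "Suc c * (Suc (c + Suc c) choose Suc c) = Suc (Suc c) * (Suc (c + Suc c) choose c)"
    by (rule Suc_times_binomial_add)
  have sc: "Suc (c + Suc c) = 2 * a" using Suc by simp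
  have k2: "a * (2*a choose a) = Suc a * (2*a choose c)"
    using k unfolding sc by (simp only: Suc[symmetric])
  then have k': "real a * real (2*a choose a) = (real a + 1) * real (2*a choose c)"
    by (metis of_nat_Suc of_nat_mult add.commute)
  have a1: "real a + 1 > 0" by simp
  have "real (ballot (2*a) 0) * (real a + 1) = (real (2*a choose a) - real (2*a choose c)) * (real a + 1)"
    using e by simp
  also have "\<dots> = real (2*a choose a) * (real a + 1) - (real a + 1) * real (2*a choose c)"
    by (simp add: algebra_simps)
  also have "\<dots> = real (2*a choose a)" using k' by (simp add: algebra_simps)
  finally have "real (ballot (2*a) 0) * (real a + 1) = real (2*a choose a)" .
  then show ?thesis using a1 by (simp add: eq_divide_eq)
qed

lemma central_binomial_Suc_nat: "(2 * Suc a choose Suc a) * (a + 1) = 2 * (2 * a + 1) * (2 * a choose a)"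
proof -
  have 1: "Suc (2*a+1) * ((2*a+1) choose a) = (Suc (2*a+1) choose Suc a) * Suc a"
    by (rule Suc_times_binomial_eq)
  have 2: "Suc (2*a) * ((2*a) choose a) = (Suc (2*a) choose Suc a) * Suc a"
    by (rule Suc_times_binomial_eq)
  have 3: "(Suc (2*a) choose Suc a) = (Suc (2*a) choose a)"
    by (subst binomial_symmetric) auto
  have e1: "Suc (2*a+1) = 2 * Suc a" by simp
  have "(2 * Suc a choose Suc a) * (a + 1) * (a + 1) = Suc (2*a+1) * ((2*a+1) choose a) * (a + 1)"
    using 1 e1 by simp
  also have "\<dots> = Suc (2*a+1) * (((2*a+1) choose a) * Suc a)" by simp
  also have "((2*a+1) choose a) * Suc a = Suc (2*a) * ((2*a) choose a)" using 2 3 by simp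
  also have "Suc (2*a+1) * (Suc (2*a) * ((2*a) choose a)) = (2 * (2 * a + 1) * (2 * a choose a)) * (a + 1)"
    by (simp add: algebra_simps)
  finally have fin: "(2 * Suc a choose Suc a) * (a + 1) * (a + 1) = (2 * (2 * a + 1) * (2 * a choose a)) * (a + 1)" .
  have ne: "a + 1 \<noteq> (0::nat)" by simp
  show ?thesis using fin by (simp only: mult_right_cancel[OF ne])
qed

lemma central_binomial_Suc:
  "real (2 * Suc a choose Suc a) * (real a + 1) = 2 * (2 * real a + 1) * real (2 * a choose a)"
proof -
  have "real ((2 * Suc a choose Suc a) * (a + 1)) = real (2 * (2 * a + 1) * (2 * a choose a))"
    using central_binomial_Suc_nat[of a] by (simp only:)
  then show ?thesis by (simp only: of_nat_mult of_nat_add of_nat_1 of_nat_numeral)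
qed

lemma central_binomial_upper: "real (2 * a choose a) ^ 2 * (real a + 1) \<le> 16 ^ a"
proof (induction a)
  case 0 then show ?case by simp
next
  case (Suc a)
  define c where "c = real (2 * a choose a)"
  define c' where "c' = real (2 * Suc a choose Suc a)"
  have step: "c' * (real a + 1) = 2 * (2 * real a + 1) * c"
    unfolding c_def c'_def by (rule central_binomial_Suc)
  have poly: "(2 * real a + 1) ^ 2 * (real a + 2) \<le> 4 * (real a + 1) ^ 3"
    by (simp add: power2_eq_square power3_eq_cube algebra_simps)
  have "(c' ^ 2 * (real (Suc a) + 1)) * (real a + 1) ^ 2 = (c' * (real a + 1)) ^ 2 * (real a + 2)"
    by (simp add: power2_eq_square algebra_simps)
  also have "\<dots> = 4 * c ^ 2 * ((2 * real a + 1) ^ 2 * (real a + 2))"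
    unfolding step by (simp add: power2_eq_square algebra_simps)
  also have "\<dots> \<le> 4 * c ^ 2 * (4 * (real a + 1) ^ 3)"
    by (rule mult_left_mono[OF poly]) simp
  also have "\<dots> = 16 * (c ^ 2 * (real a + 1)) * (real a + 1) ^ 2"
    by (simp add: power2_eq_square power3_eq_cube algebra_simps)
  also have "\<dots> \<le> 16 ^ Suc a * (real a + 1) ^ 2"
    using Suc.IH unfolding c_def by simp
  finally show ?case
    unfolding c'_def by (simp add: mult_le_cancel_right add_pos_nonneg)
qed

lemma central_binomial_lower: "a \<ge> 1 \<Longrightarrow> 16 ^ a \<le> 4 * real a * real (2 * a choose a) ^ 2"
proof (induction a rule: dec_induct)
  case base then show ?case by (simp add: numeral_2_eq_2)
next
  case (step a)
  define c where "c = real (2 * a choose a)"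
  define c' where "c' = real (2 * Suc a choose Suc a)"
  have a1: "real a + 1 > 0" by simp
  have step': "c' * (real a + 1) = 2 * (2 * real a + 1) * c"
    unfolding c_def c'_def by (rule central_binomial_Suc)
  have poly: "4 * real a * (real a + 1) \<le> (2 * real a + 1) ^ 2"
    by (simp add: power2_eq_square algebra_simps)
  have "16 ^ Suc a * (real a + 1) \<le> 16 * (4 * real a * c ^ 2) * (real a + 1)"
    using step.IH unfolding c_def by simp
  also have "\<dots> = 16 * c ^ 2 * (4 * real a * (real a + 1))" by (simp add: algebra_simps)
  also have "\<dots> \<le> 16 * c ^ 2 * (2 * real a + 1) ^ 2"
    by (rule mult_left_mono[OF poly]) simp
  also have "\<dots> = 4 * (c' * (real a + 1)) ^ 2"
    unfolding step' by (simp add: power2_eq_square algebra_simps)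
  also have "\<dots> = (4 * real (Suc a) * c' ^ 2) * (real a + 1)"
    by (simp add: power2_eq_square algebra_simps)
  finally show ?case
    unfolding c'_def using a1 by (simp add: mult_le_cancel_right)
qed

lemma sixteen_power: "(16::real) ^ a = (4 ^ a) ^ 2"
proof -
  have "(4::real) ^ (2 * a) = (4 ^ 2) ^ a" "(4::real) ^ (a * 2) = (4 ^ a) ^ 2" by (rule power_mult)+
  then show ?thesis by (simp add: mult.commute)
qed

lemma powr_neg_three_halves_sq:
  assumes x: "(x::real) > 0"
  shows "(x powr (-3/2)) ^ 2 * x ^ 3 = 1"
proof -
  have "(x powr (-3/2)) ^ 2 = x powr (-3)" by (simp add: power2_eq_square powr_add[symmetric])
  moreover have "x ^ 3 = x powr 3" using powr_realpow[OF x, of 3] by simp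
  moreover have "x powr (-3) * x powr 3 = 1" using x by (subst powr_add[symmetric]) simp
  ultimately show ?thesis by simp
qed

lemma ballot_catalan_upper: "real (ballot (2 * a) 0) \<le> 4 ^ a * (real a + 1) powr (-3/2)"
proof -
  define K where "K = real (ballot (2 * a) 0)"
  define x where "x = real a + 1"
  have x: "x > 0" using x_def by simp
  have K: "K * x = real (2 * a choose a)" using ballot_catalan[of a] x by (simp add: K_def x_def)
  have "K ^ 2 * x ^ 3 = (K * x) ^ 2 * x" by (simp add: power2_eq_square power3_eq_cube)
  also have "\<dots> = real (2 * a choose a) ^ 2 * x" unfolding K ..
  also have "\<dots> \<le> (4 ^ a) ^ 2"
    using central_binomial_upper[of a] unfolding sixteen_power x_def .
  also have "\<dots> = (4 ^ a * x powr (-3/2)) ^ 2 * x ^ 3"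
    unfolding power_mult_distrib using powr_neg_three_halves_sq[OF x] by (simp add: mult.assoc)
  finally have "K ^ 2 \<le> (4 ^ a * x powr (-3/2)) ^ 2" using x by (simp add: mult_le_cancel_right)
  then show ?thesis unfolding K_def x_def by (rule power2_le_imp_le) simp
qed

lemma ballot_catalan_lower: "4 ^ a * (real a + 1) powr (-3/2) / 2 \<le> real (ballot (2 * a) 0)"
proof -
  define K where "K = real (ballot (2 * a) 0)"
  define x where "x = real a + 1"
  have x: "x > 0" using x_def by simp
  have K: "real (2 * a choose a) = K * x" using ballot_catalan[of a] x by (simp add: K_def x_def)
  have "16 ^ a \<le> 4 * x * real (2 * a choose a) ^ 2"
  proof (cases "a = 0")
    case True then show ?thesis by (simp add: x_def)
  next
    case False
    then have "16 ^ a \<le> 4 * real a * real (2 * a choose a) ^ 2" by (simp add: central_binomial_lower)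
    also have "\<dots> \<le> 4 * x * real (2 * a choose a) ^ 2" by (simp add: x_def mult_right_mono)
    finally show ?thesis .
  qed
  also have "\<dots> = 4 * (K ^ 2 * x ^ 3)" unfolding K by (simp add: power2_eq_square power3_eq_cube)
  finally have "16 ^ a / 4 \<le> K ^ 2 * x ^ 3" by simp
  moreover have "(4 ^ a * x powr (-3/2) / 2) ^ 2 * x ^ 3 = 16 ^ a / 4"
    unfolding sixteen_power power_mult_distrib power_divide
    using powr_neg_three_halves_sq[OF x] by (simp add: mult.assoc)
  ultimately have "(4 ^ a * x powr (-3/2) / 2) ^ 2 * x ^ 3 \<le> K ^ 2 * x ^ 3" by simp
  then have "(4 ^ a * x powr (-3/2) / 2) ^ 2 \<le> K ^ 2" using x by (simp add: mult_le_cancel_right)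
  then show ?thesis unfolding K_def x_def by (rule power2_le_imp_le) simp
qed

section \<open>Counting non-crossing perfect matchings\<close>

lemma finite_catalan_matchings: "finite P \<Longrightarrow> finite (catalan_matchings P)"
  by (rule finite_subset[of _ "Pow (P \<times> P)"])
     (auto simp: catalan_matchings_def perfect_matching_on_def)

lemma catalan_matching_arcD:
  "M \<in> catalan_matchings P \<Longrightarrow> (a, b) \<in> M \<Longrightarrow> a \<in> P \<and> b \<in> P \<and> a < b"
  by (auto simp: catalan_matchings_def perfect_matching_on_def)

lemma catalan_matching_partner_unique:
  assumes M: "M \<in> catalan_matchings P" and "matched M p q" "matched M p q'"
  shows "q = q'"
proof -
  have "p \<in> P" using assms catalan_matching_arcD[OF M] by (auto simp: matched_def)
  then show ?thesis
    using assms by (auto simp: catalan_matchings_def perfect_matching_on_def)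
qed

lemma catalan_matching_partner_exists:
  "M \<in> catalan_matchings P \<Longrightarrow> p \<in> P \<Longrightarrow> \<exists>q. matched M p q"
  by (auto simp: catalan_matchings_def perfect_matching_on_def)

lemma catalan_matching_no_crossing:
  "M \<in> catalan_matchings P \<Longrightarrow> (a, c) \<in> M \<Longrightarrow> (b, d) \<in> M \<Longrightarrow>
    a < b \<Longrightarrow> b < c \<Longrightarrow> c < d \<Longrightarrow> False"
  by (auto simp: catalan_matchings_def noncrossing_def)

lemma matched_sym: "matched M a b \<longleftrightarrow> matched M b a"
  by (auto simp: matched_def)

lemma matched_insert:
  "matched (insert (a, b) N) r q \<longleftrightarrow> matched N r q \<or> (r = a \<and> q = b) \<or> (r = b \<and> q = a)"
  by (auto simp: matched_def)

lemma catalan_matchings_remove_arc: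
  assumes M: "M \<in> catalan_matchings Q" and mp: "(m, p) \<in> M"
  shows "M - {(m, p)} \<in> catalan_matchings (Q - {m, p})"
proof -
  have "m < p" using catalan_matching_arcD[OF M mp] by simp
  have partner_m: "matched M m q \<Longrightarrow> q = p" for q
    using catalan_matching_partner_unique[OF M, of m q p] mp by (simp add: matched_def)
  have partner_p: "matched M p q \<Longrightarrow> q = m" for q
    using catalan_matching_partner_unique[OF M, of p q m] mp by (simp add: matched_def)
  have arc: "a \<in> Q - {m, p} \<and> b \<in> Q - {m, p} \<and> a < b" if ab: "(a, b) \<in> M - {(m, p)}" for a b
  proof -
    have "a \<in> Q" "b \<in> Q" "a < b" using catalan_matching_arcD[OF M] ab by auto
    moreover have "matched M a b" "matched M b a" using ab by (auto simp: matched_def)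
    then have "a \<noteq> m" "a \<noteq> p" "b \<noteq> p" "b \<noteq> m"
      using partner_m[of b] partner_p[of b] partner_p[of a] partner_m[of a] ab \<open>a < b\<close> \<open>m < p\<close>
      by (metis DiffD2 singletonI, metis not_less_iff_gr_or_eq, metis DiffD2 singletonI,
          metis not_less_iff_gr_or_eq)
    ultimately show ?thesis by simp
  qed
  have "\<exists>!q. matched (M - {(m, p)}) r q" if r: "r \<in> Q - {m, p}" for r
  proof -
    obtain q where q: "matched M r q" using catalan_matching_partner_exists[OF M] r by blast
    have "q \<noteq> m" "q \<noteq> p" using q r partner_m[of r] partner_p[of r] by (auto simp: matched_sym)
    then have "matched (M - {(m, p)}) r q" using q r by (auto simp: matched_def)
    then show ?thesis
      using catalan_matching_partner_unique[OF M, of r] by (auto simp: matched_def)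
  qed
  then have "perfect_matching_on (Q - {m, p}) (M - {(m, p)})"
    using arc unfolding perfect_matching_on_def by blast
  moreover have "noncrossing (M - {(m, p)})"
    using M by (auto simp: catalan_matchings_def noncrossing_def)
  ultimately show ?thesis by (simp add: catalan_matchings_def)
qed

lemma catalan_matchings_insert_outer_arc:
  assumes N: "N \<in> catalan_matchings Q" and mp: "m < p" and outside: "\<forall>q\<in>Q. q < m \<or> p < q"
  shows "insert (m, p) N \<in> catalan_matchings (insert m (insert p Q))"
proof -
  have "\<exists>!q. matched (insert (m, p) N) r q" if r: "r \<in> insert m (insert p Q)" for r
  proof (cases "r = m \<or> r = p")
    case True
    then have "\<not> matched N r q" for q
      using outside mp catalan_matching_arcD[OF N] by (fastforce simp: matched_def)
    then show ?thesis using True mp unfolding matched_insert by auto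
  next
    case False
    then obtain q where q: "matched N r q" "\<And>q'. matched N r q' \<Longrightarrow> q' = q"
      using r catalan_matching_partner_exists[OF N] catalan_matching_partner_unique[OF N] by blast
    then show ?thesis using False unfolding matched_insert by auto
  qed
  then have "perfect_matching_on (insert m (insert p Q)) (insert (m, p) N)"
    using mp catalan_matching_arcD[OF N] unfolding perfect_matching_on_def by auto
  moreover have "noncrossing (insert (m, p) N)"
    unfolding noncrossing_def
  proof clarify
    fix a b c d assume o: "a < b" "b < c" "c < d"
      and ac: "(a, c) \<in> insert (m, p) N" and bd: "(b, d) \<in> insert (m, p) N"
    show False
    proof (cases "(a, c) = (m, p)")
      case True
      then have "(b, d) \<in> N" using bd o by auto
      then show False using True o outside catalan_matching_arcD[OF N] by fastforce
    next
      case False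
      then have acN: "(a, c) \<in> N" using ac by auto
      show False
      proof (cases "(b, d) = (m, p)")
        case True
        then show False using o outside catalan_matching_arcD[OF N acN] by fastforce
      next
        case False
        then show False using bd catalan_matching_no_crossing[OF N acN _ o] by auto
      qed
    qed
  qed
  ultimately show ?thesis by (simp add: catalan_matchings_def)
qed

text \<open>The points of \<open>H\<close> are open arcs, each of which has to be closed by a point of \<open>P\<close>.\<close>
definition closing_matchings :: "nat set \<Rightarrow> nat set \<Rightarrow> (nat \<times> nat) set set" where
  "closing_matchings P H =
     {M \<in> catalan_matchings (H \<union> P). \<forall>a b. (a, b) \<in> M \<longrightarrow> \<not> (a \<in> H \<and> b \<in> H)}"

lemma finite_closing_matchings: "finite P \<Longrightarrow> finite H \<Longrightarrow> finite (closing_matchings P H)"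
  by (rule finite_subset[OF _ finite_catalan_matchings[of "H \<union> P"]])
     (auto simp: closing_matchings_def)

lemma closing_matchings_empty: "closing_matchings {} H = (if H = {} then {{}} else {})"
proof (cases "H = {}")
  case True
  then show ?thesis
    by (auto simp: closing_matchings_def catalan_matchings_def perfect_matching_on_def noncrossing_def)
next
  case False
  then obtain h where h: "h \<in> H" by auto
  have "M \<notin> closing_matchings {} H" for M
  proof
    assume "M \<in> closing_matchings {} H"
    then have M: "M \<in> catalan_matchings H" and inner: "\<forall>a b. (a, b) \<in> M \<longrightarrow> \<not> (a \<in> H \<and> b \<in> H)"
      by (auto simp: closing_matchings_def)
    obtain q where "matched M h q" using catalan_matching_partner_exists[OF M h] by auto
    then show False using catalan_matching_arcD[OF M] inner by (auto simp: matched_def)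
  qed
  then show ?thesis using False by auto
qed

context
  fixes P H :: "nat set"
  assumes finite: "finite P" "P \<noteq> {}" "finite H" and left: "\<forall>h\<in>H. h < Min P"
begin

lemma closing_matchings_partner_Max:
  assumes M: "M \<in> closing_matchings P H" and hH: "h \<in> H" and hp: "(h, Min P) \<in> M"
  shows "h = Max H"
proof (rule ccontr)
  assume ne: "h \<noteq> Max H"
  define p where "p = Min P"
  define m where "m = Max H"
  have mH: "m \<in> H" using hH finite m_def by (metis Max_in empty_iff)
  have hm: "h < m" using ne hH finite m_def by (meson Max_ge le_neq_implies_less)
  have mp: "m < p" using left mH p_def by auto
  have cm: "M \<in> catalan_matchings (H \<union> P)" and nh: "\<forall>a b. (a,b) \<in> M \<longrightarrow> \<not> (a \<in> H \<and> b \<in> H)"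
    using M by (auto simp: closing_matchings_def)
  obtain q where q: "matched M m q" using catalan_matching_partner_exists[OF cm] mH by auto
  have Pge: "r \<in> P \<Longrightarrow> p \<le> r" for r using finite p_def by auto
  have "(m, q) \<in> M"
  proof -
    { assume "(q, m) \<in> M"
      then have "q \<in> H \<union> P" "q < m" using catalan_matching_arcD[OF cm] by auto
      moreover have "q \<notin> H" using nh \<open>(q,m) \<in> M\<close> mH by auto
      ultimately have False using Pge mp by fastforce }
    then show ?thesis using q by (auto simp: matched_def)
  qed
  then have "q \<in> H \<union> P" "m < q" "q \<notin> H" using catalan_matching_arcD[OF cm] nh mH by auto
  then have "p \<le> q" using Pge by auto
  moreover have "q \<noteq> p"
  proof
    assume "q = p"
    then have "matched M p m" "matched M p h" using \<open>(m,q) \<in> M\<close> hp p_def by (auto simp: matched_def)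
    then show False using catalan_matching_partner_unique[OF cm] hm by blast
  qed
  ultimately have "p < q" by auto
  show False using catalan_matching_no_crossing[OF cm hp[folded p_def] \<open>(m,q) \<in> M\<close> hm mp \<open>p < q\<close>] .
qed

lemma closing_matchings_open_Min:
  "closing_matchings (P - {Min P}) (insert (Min P) H)
     = {M \<in> closing_matchings P H. \<forall>h\<in>H. (h, Min P) \<notin> M}"
proof -
  define p where "p = Min P"
  have pP: "p \<in> P" using finite by (auto simp: p_def)
  have eq: "insert p H \<union> (P - {p}) = H \<union> P" using pP by auto
  show ?thesis
    unfolding p_def[symmetric]
  proof (intro equalityI subsetI)
    fix M assume "M \<in> closing_matchings (P - {p}) (insert p H)"
    then have M: "M \<in> catalan_matchings (H \<union> P)"
      and nh: "\<forall>a b. (a,b) \<in> M \<longrightarrow> \<not> (a \<in> insert p H \<and> b \<in> insert p H)"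
      unfolding closing_matchings_def eq by auto
    show "M \<in> {M \<in> closing_matchings P H. \<forall>h\<in>H. (h,p) \<notin> M}" unfolding closing_matchings_def using M nh by blast
  next
    fix M assume "M \<in> {M \<in> closing_matchings P H. \<forall>h\<in>H. (h,p) \<notin> M}"
    then have M: "M \<in> catalan_matchings (H \<union> P)"
      and nh: "\<forall>a b. (a,b) \<in> M \<longrightarrow> \<not> (a \<in> H \<and> b \<in> H)" and np: "\<forall>h\<in>H. (h, p) \<notin> M"
      unfolding closing_matchings_def by auto
    have "\<forall>a b. (a,b) \<in> M \<longrightarrow> \<not> (a \<in> insert p H \<and> b \<in> insert p H)"
    proof (intro allI impI notI)
      fix a b assume ab: "(a,b) \<in> M" and a: "a \<in> insert p H \<and> b \<in> insert p H"
      have lt: "a < b" using catalan_matching_arcD[OF M ab] by simp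
      show False
      proof (cases "a = p")
        case True then show False using a lt left p_def by auto
      next
        case False then have "a \<in> H" using a by auto
        then show False using a ab nh np by auto
      qed
    qed
    then show "M \<in> closing_matchings (P - {p}) (insert p H)" unfolding closing_matchings_def eq using M by blast
  qed
qed

lemma closing_matchings_close_Min:
  assumes "H \<noteq> {}"
  shows "{M \<in> closing_matchings P H. (Max H, Min P) \<in> M}
           = insert (Max H, Min P) ` closing_matchings (P - {Min P}) (H - {Max H})"
proof -
  define p where "p = Min P"
  define m where "m = Max H"
  have mH: "m \<in> H" and pP: "p \<in> P" using assms finite by (auto simp: m_def p_def)
  have mp: "m < p" using left mH p_def by auto
  have mP: "m \<notin> P" using left mH finite by (meson Min_le not_less)
  have Q: "(H \<union> P) - {m, p} = (H - {m}) \<union> (P - {p})"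
    "insert m (insert p ((H - {m}) \<union> (P - {p}))) = H \<union> P"
    using mH pP mP mp left p_def by auto
  have outside: "\<forall>q\<in>(H - {m}) \<union> (P - {p}). q < m \<or> p < q"
    using finite m_def p_def by (auto simp: le_neq_implies_less)
  have remove: "M - {(m, p)} \<in> closing_matchings (P - {p}) (H - {m})"
    if "M \<in> closing_matchings P H" "(m, p) \<in> M" for M
    using that catalan_matchings_remove_arc[of M "H \<union> P" m p]
    unfolding closing_matchings_def Q by auto
  have insert: "insert (m, p) N \<in> closing_matchings P H"
    if N: "N \<in> closing_matchings (P - {p}) (H - {m})" for N
  proof -
    have cN: "N \<in> catalan_matchings ((H - {m}) \<union> (P - {p}))"
      using N by (simp add: closing_matchings_def)
    then have "insert (m, p) N \<in> catalan_matchings (H \<union> P)"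
      using catalan_matchings_insert_outer_arc[OF cN mp outside] unfolding Q by simp
    moreover have "b \<notin> H" if "(a, b) \<in> N" "a \<in> H" for a b
      using that N catalan_matching_arcD[OF cN that(1)] mP by (fastforce simp: closing_matchings_def)
    moreover have "p \<notin> H" using left p_def by auto
    ultimately show ?thesis unfolding closing_matchings_def by auto
  qed
  show ?thesis
    unfolding m_def[symmetric] p_def[symmetric]
  proof (intro equalityI subsetI)
    fix M assume "M \<in> {M \<in> closing_matchings P H. (m, p) \<in> M}"
    then have "M = insert (m, p) (M - {(m, p)})" "M - {(m, p)} \<in> closing_matchings (P - {p}) (H - {m})"
      using remove by auto
    then show "M \<in> insert (m, p) ` closing_matchings (P - {p}) (H - {m})" by blast
  qed (use insert in auto)
qed

lemma card_closing_matchings_rec: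
  "card (closing_matchings P H)
     = (if H = {} then 0 else card (closing_matchings (P - {Min P}) (H - {Max H})))
       + card (closing_matchings (P - {Min P}) (insert (Min P) H))"
proof (cases "H = {}")
  case True
  then show ?thesis using closing_matchings_open_Min by simp
next
  case False
  define p where "p = Min P"
  define m where "m = Max H"
  let ?close = "{M \<in> closing_matchings P H. (m, p) \<in> M}"
  let ?open = "{M \<in> closing_matchings P H. \<forall>h\<in>H. (h, p) \<notin> M}"
  have mH: "m \<in> H" using False finite m_def by auto
  have mP: "m \<notin> P" using left mH finite by (meson Min_le not_less)
  have "inj_on (insert (m, p)) (closing_matchings (P - {p}) (H - {m}))"
  proof (rule inj_onI)
    fix A B assume "A \<in> closing_matchings (P - {p}) (H - {m})" "B \<in> closing_matchings (P - {p}) (H - {m})"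
      and eq: "insert (m, p) A = insert (m, p) B"
    then have "(m, p) \<notin> A" "(m, p) \<notin> B"
      using mP by (auto simp: closing_matchings_def dest: catalan_matching_arcD)
    then show "A = B" using eq by (metis insert_ident)
  qed
  then have "card ?close = card (closing_matchings (P - {p}) (H - {m}))"
    using closing_matchings_close_Min[OF False] by (simp add: card_image m_def p_def)
  moreover have "closing_matchings P H = ?close \<union> ?open" "?close \<inter> ?open = {}"
    using closing_matchings_partner_Max mH by (auto simp: m_def p_def)
  moreover have "finite (closing_matchings P H)" using finite_closing_matchings finite by auto
  ultimately show ?thesis
    using closing_matchings_open_Min False card_Un_disjoint[of ?close ?open]
    by (simp add: m_def p_def)
qed

end

text \<open>Scanning \<open>P\<close> from the left, each point closes the innermost open point or opens a new
  one: the ballot recursion with \<open>card H\<close> open points.\<close>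
theorem card_closing_matchings:
  "finite P \<Longrightarrow> finite H \<Longrightarrow> \<forall>h\<in>H. \<forall>q\<in>P. h < q \<Longrightarrow>
    card (closing_matchings P H) = ballot (card P) (card H)"
proof (induction "card P" arbitrary: P H)
  case 0
  then have "P = {}" by auto
  then show ?case using 0 by (auto simp: closing_matchings_empty)
next
  case (Suc u)
  then have Pne: "P \<noteq> {}" by auto
  define p where "p = Min P"
  have pP: "p \<in> P" using Pne Suc.prems p_def by auto
  have left: "\<forall>h\<in>H. h < Min P" using Suc.prems pP p_def by auto
  have cP: "card (P - {p}) = u" using Suc.hyps pP Suc.prems by auto
  have gt: "\<forall>q\<in>P - {p}. p < q" using p_def Suc.prems(1) pP
    by (metis DiffE Min_le order_le_neq_trans singletonI)
  have IH_open: "card (closing_matchings (P - {p}) (insert p H)) = ballot u (Suc (card H))"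
    using Suc.hyps(1)[of "P - {p}" "insert p H"] cP Suc.prems gt left p_def by auto
  note rec = card_closing_matchings_rec[OF Suc.prems(1) Pne Suc.prems(2) left]
  show ?case
  proof (cases "H = {}")
    case True
    then show ?thesis using rec IH_open Suc.hyps(2)[symmetric] by (simp add: p_def)
  next
    case False
    have IH_close: "card (closing_matchings (P - {p}) (H - {Max H})) = ballot u (card H - 1)"
      using Suc.hyps(1)[of "P - {p}" "H - {Max H}"] cP Suc.prems False by auto
    show ?thesis
      using rec IH_open IH_close Suc.hyps(2)[symmetric] False Suc.prems(2)
      by (simp add: p_def card_gt_0_iff)
  qed
qed

lemma card_catalan_matchings: "finite P \<Longrightarrow> card (catalan_matchings P) = ballot (card P) 0"
  using card_closing_matchings[of P "{}"] by (simp add: closing_matchings_def)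

lemma card_catalan_matchings_upper:
  assumes "finite Q"
  shows "real (card (catalan_matchings Q)) \<le> 4 ^ (card Q div 2) * (real (card Q div 2) + 1) powr (-3/2)"
proof (cases "even (card Q)")
  case True
  then have "card Q = 2 * (card Q div 2)" by simp
  then show ?thesis using card_catalan_matchings[OF assms] ballot_catalan_upper[of "card Q div 2"] by metis
next
  case False
  then show ?thesis using card_catalan_matchings[OF assms] ballot_odd[of "card Q" 0] by simp
qed

lemma card_catalan_matchings_lower:
  assumes "finite Q" "even (card Q)"
  shows "4 ^ (card Q div 2) * (real (card Q div 2) + 1) powr (-3/2) / 2 \<le> real (card (catalan_matchings Q))"
proof -
  have "card Q = 2 * (card Q div 2)" using assms by simp
  then show ?thesis using card_catalan_matchings[OF assms(1)] ballot_catalan_lower[of "card Q div 2"] by metis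
qed

lemma catalan_matchings_nonempty:
  assumes "finite P" "even (card P)"
  shows "catalan_matchings P \<noteq> {}"
proof -
  have "0 < 4 ^ (card P div 2) * (real (card P div 2) + 1) powr (-3/2) / (2::real)" by simp
  then have "card (catalan_matchings P) \<noteq> 0"
    using card_catalan_matchings_lower[OF assms] by linarith
  then show ?thesis by auto
qed

section \<open>Regions cut out by prescribed arcs\<close>

text \<open>The regions whose free points the paper counts by \<open>f\<^sub>0\<close> and \<open>f\<^sub>i\<close>; list index \<open>i\<close>
  corresponds to the paper's \<open>i + 1\<close>.\<close>
fun region :: "nat \<Rightarrow> nat list \<Rightarrow> nat list \<Rightarrow> nat \<Rightarrow> nat set" where
  "region N x k 0 = {p \<in> {1..N}. \<forall>i<length x. \<not> (x!i \<le> p \<and> p \<le> x!i + k!i)}"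
| "region N x k (Suc i) = {p. x!i < p \<and> p < x!i + k!i \<and>
        (\<forall>i'<length x. i' \<noteq> i \<and> x!i \<le> x!i' \<and> x!i' + k!i' \<le> x!i + k!i
                \<longrightarrow> \<not> (x!i' \<le> p \<and> p \<le> x!i' + k!i'))}"

definition has_arcs :: "nat list \<Rightarrow> nat list \<Rightarrow> (nat \<times> nat) set \<Rightarrow> bool" where
  "has_arcs x k M \<longleftrightarrow> (\<forall>i<length x. (x!i, x!i + k!i) \<in> M)"

definition not_endpoint :: "nat list \<Rightarrow> nat list \<Rightarrow> nat \<Rightarrow> bool" where
  "not_endpoint x k p \<longleftrightarrow> (\<forall>j<length x. p \<noteq> x!j \<and> p \<noteq> x!j + k!j)"

lemma region_subset:
  assumes "\<forall>i<length x. x!i + k!i \<le> N" "i \<le> length x"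
  shows "region N x k i \<subseteq> {1..N}"
proof (cases i)
  case 0
  then show ?thesis by auto
next
  case (Suc i0)
  then have "x!i0 + k!i0 \<le> N" using assms by auto
  then show ?thesis using Suc by auto
qed

lemma inside_arc_iff_arc_inside:
  assumes M: "M \<in> catalan_matchings P" and cd: "(c,d) \<in> M" and ab: "(a,b) \<in> M"
    and ne: "a \<noteq> c" "a \<noteq> d" "b \<noteq> c" "b \<noteq> d"
  shows "(c < a \<and> a < d) \<longleftrightarrow> (c < b \<and> b < d)"
proof -
  have cdl: "c < d" using catalan_matching_arcD[OF M cd] by simp
  have abl: "a < b" using catalan_matching_arcD[OF M ab] by simp
  show ?thesis
  proof
    assume h: "c < a \<and> a < d"
    show "c < b \<and> b < d"
    proof (rule ccontr)
      assume "\<not> (c < b \<and> b < d)"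
      then have "d < b" using h abl ne by auto
      then show False using catalan_matching_no_crossing[OF M cd ab] h by auto
    qed
  next
    assume h: "c < b \<and> b < d"
    show "c < a \<and> a < d"
    proof (rule ccontr)
      assume "\<not> (c < a \<and> a < d)"
      then have "a < c" using h abl ne by auto
      then show False using catalan_matching_no_crossing[OF M ab cd] h by auto
    qed
  qed
qed

lemma inside_arc_iff_partner_inside:
  assumes M: "M \<in> catalan_matchings P" and cd: "(c,d) \<in> M" and ab: "matched M a b"
    and ne: "a \<noteq> c" "a \<noteq> d" "b \<noteq> c" "b \<noteq> d"
  shows "(c < a \<and> a < d) \<longleftrightarrow> (c < b \<and> b < d)"
  using ab inside_arc_iff_arc_inside[OF M cd _ ne] inside_arc_iff_arc_inside[OF M cd _ ne(3,4,1,2)] unfolding matched_def by blast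

lemma catalan_matchings_Restr:
  assumes M: "M \<in> catalan_matchings P" and Q: "Q \<subseteq> P"
    and closed: "\<And>r q. r \<in> Q \<Longrightarrow> matched M r q \<Longrightarrow> q \<in> Q"
  shows "Restr M Q \<in> catalan_matchings Q"
proof -
  have "\<exists>!q. matched (Restr M Q) r q" if r: "r \<in> Q" for r
  proof -
    obtain q where "matched M r q" using catalan_matching_partner_exists[OF M] r Q by blast
    then have "matched (Restr M Q) r q" using closed r by (auto simp: matched_def)
    then show ?thesis using catalan_matching_partner_unique[OF M, of r] by (auto simp: matched_def)
  qed
  then have "perfect_matching_on Q (Restr M Q)"
    using catalan_matching_arcD[OF M] by (auto simp: perfect_matching_on_def)
  moreover have "noncrossing (Restr M Q)"
    using M by (auto simp: catalan_matchings_def noncrossing_def)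
  ultimately show ?thesis by (simp add: catalan_matchings_def)
qed

context
  fixes N :: nat and x k :: "nat list" and P :: "nat set" and M :: "(nat \<times> nat) set"
  assumes M: "M \<in> catalan_matchings P" and arcs: "has_arcs x k M" and sorted: "sorted_wrt (<) x"
    and PN: "P \<subseteq> {1..N}"
begin

lemma has_arcsD: "i < length x \<Longrightarrow> (x!i, x!i + k!i) \<in> M"
  using arcs by (auto simp: has_arcs_def)

lemma arc_less: "i < length x \<Longrightarrow> x!i < x!i + k!i"
  using catalan_matching_arcD[OF M has_arcsD] by auto

lemma sorted_nth_inj: "i < length x \<Longrightarrow> j < length x \<Longrightarrow> x!i = x!j \<Longrightarrow> i = j"
  using sorted_wrt_nth_less[OF sorted] by (metis less_irrefl nat_neq_iff)

lemma matched_arc_start: "i < length x \<Longrightarrow> matched M (x!i) q \<Longrightarrow> q = x!i + k!i"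
  using catalan_matching_partner_unique[OF M] has_arcsD by (auto simp: matched_def)

lemma matched_arc_end: "i < length x \<Longrightarrow> matched M (x!i + k!i) q \<Longrightarrow> q = x!i"
  using catalan_matching_partner_unique[OF M] has_arcsD by (auto simp: matched_def)

lemma not_endpoint_partner: "not_endpoint x k r \<Longrightarrow> matched M r q \<Longrightarrow> not_endpoint x k q"
  unfolding not_endpoint_def
proof (intro allI impI conjI)
  fix j assume ne: "\<forall>j<length x. r \<noteq> x ! j \<and> r \<noteq> x ! j + k ! j" and rq: "matched M r q" and j: "j < length x"
  show "q \<noteq> x!j"
  proof
    assume "q = x!j" then have "matched M (x!j) r" using rq matched_sym by metis
    then show False using matched_arc_start[OF j] ne j by auto
  qed
  show "q \<noteq> x!j + k!j"
  proof
    assume "q = x!j + k!j" then have "matched M (x!j + k!j) r" using rq matched_sym by metis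
    then show False using matched_arc_end[OF j] ne j by auto
  qed
qed

lemma arc_ends_distinct:
  assumes i: "i < length x" and j: "j < length x" and ij: "i \<noteq> j"
  shows "x!j \<noteq> x!i" "x!j \<noteq> x!i + k!i" "x!j + k!j \<noteq> x!i" "x!j + k!j \<noteq> x!i + k!i"
proof -
  show "x!j \<noteq> x!i" using sorted_nth_inj i j ij by metis
  show "x!j \<noteq> x!i + k!i"
  proof
    assume e: "x!j = x!i + k!i"
    have "matched M (x!j) (x!j + k!j)" using has_arcsD[OF j] by (auto simp: matched_def)
    then have "x!j + k!j = x!i" using matched_arc_end[OF i] e by auto
    then show False using e arc_less[OF i] arc_less[OF j] by auto
  qed
  show "x!j + k!j \<noteq> x!i"
  proof
    assume e: "x!j + k!j = x!i"
    have "matched M (x!i) (x!j)" using has_arcsD[OF j] e by (auto simp: matched_def)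
    then have "x!j = x!i + k!i" using matched_arc_start[OF i] by auto
    then show False using e arc_less[OF i] arc_less[OF j] by auto
  qed
  show "x!j + k!j \<noteq> x!i + k!i"
  proof
    assume e: "x!j + k!j = x!i + k!i"
    have "matched M (x!i + k!i) (x!j)" using has_arcsD[OF j] e by (auto simp: matched_def)
    then have "x!j = x!i" using matched_arc_end[OF i] by auto
    then show False using sorted_nth_inj i j ij by metis
  qed
qed

lemma region_not_endpoint:
  assumes "i \<le> length x" "p \<in> region N x k i"
  shows "not_endpoint x k p"
proof (cases i)
  case 0
  then show ?thesis using assms by (auto simp: not_endpoint_def)
next
  case (Suc i0)
  have i0: "i0 < length x" using assms Suc by auto
  have inside: "x!i0 < p" "p < x!i0 + k!i0" using assms Suc by auto
  have nested_free: "\<not> (x!j \<le> p \<and> p \<le> x!j + k!j)"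
    if "j < length x" "j \<noteq> i0" "x!i0 \<le> x!j" "x!j + k!j \<le> x!i0 + k!i0" for j
    using assms Suc that by auto
  show ?thesis unfolding not_endpoint_def
  proof (intro allI impI conjI notI)
    fix j assume j: "j < length x" and pj: "p = x!j"
    have ji: "i0 \<noteq> j" using pj inside by auto
    have "matched M (x!j) (x!j + k!j)" using has_arcsD[OF j] by (auto simp: matched_def)
    from inside_arc_iff_partner_inside[OF M has_arcsD[OF i0] this] arc_ends_distinct[OF i0 j ji] inside pj
    have "x!i0 < x!j + k!j" "x!j + k!j < x!i0 + k!i0" by auto
    then show False using nested_free[OF j ji[symmetric]] inside pj by auto
  next
    fix j assume j: "j < length x" and pj: "p = x!j + k!j"
    have ji: "i0 \<noteq> j" using pj inside by auto
    have "matched M (x!j + k!j) (x!j)" using has_arcsD[OF j] by (auto simp: matched_def)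
    from inside_arc_iff_partner_inside[OF M has_arcsD[OF i0] this] arc_ends_distinct[OF i0 j ji] inside pj
    have "x!i0 < x!j" "x!j < x!i0 + k!i0" by auto
    then show False using nested_free[OF j ji[symmetric]] inside pj by auto
  qed
qed

text \<open>Regions are closed under the matching, because no arc crosses a prescribed arc.\<close>
lemma region_partner:
  assumes ab: "matched M a b" and i: "i \<le> length x" and a: "a \<in> region N x k i"
  shows "b \<in> region N x k i"
proof -
  have na: "not_endpoint x k a" using region_not_endpoint[OF i a] .
  have nb: "not_endpoint x k b" using not_endpoint_partner[OF na ab] .
  have bP: "b \<in> P" using ab catalan_matching_arcD[OF M] unfolding matched_def by blast
  have ss: "(x!j < a \<and> a < x!j + k!j) \<longleftrightarrow> (x!j < b \<and> b < x!j + k!j)" if j: "j < length x" for j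
    using inside_arc_iff_partner_inside[OF M has_arcsD[OF j] ab] na nb j by (auto simp: not_endpoint_def)
  have cl: "(x!j \<le> b \<and> b \<le> x!j + k!j) \<longleftrightarrow> (x!j < b \<and> b < x!j + k!j)" if j: "j < length x" for j
    using nb j by (auto simp: not_endpoint_def)
  have cla: "(x!j \<le> a \<and> a \<le> x!j + k!j) \<longleftrightarrow> (x!j < a \<and> a < x!j + k!j)" if j: "j < length x" for j
    using na j by (auto simp: not_endpoint_def)
  show ?thesis
  proof (cases i)
    case 0
    have "\<not> (x!j \<le> b \<and> b \<le> x!j + k!j)" if j: "j < length x" for j
      using cl[OF j] ss[OF j] cla[OF j] a 0 j by auto
    then show ?thesis using bP PN 0 by auto
  next
    case (Suc i0)
    then have i0: "i0 < length x" using i by auto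
    show ?thesis using a Suc ss[OF i0] ss cl cla by auto
  qed
qed

lemma region_cover:
  assumes pP: "p \<in> P" and np: "not_endpoint x k p"
  shows "\<exists>i\<le>length x. p \<in> region N x k i"
proof (cases "\<forall>i<length x. \<not> (x!i \<le> p \<and> p \<le> x!i + k!i)")
  case True
  then show ?thesis using pP PN by (intro exI[of _ 0]) auto
next
  case False
  define J where "J = {i. i < length x \<and> x!i < p \<and> p < x!i + k!i}"
  have strict: "i < length x \<Longrightarrow> x!i \<le> p \<Longrightarrow> p \<le> x!i + k!i \<Longrightarrow> i \<in> J" for i
    using np unfolding J_def not_endpoint_def by force
  have Jne: "J \<noteq> {}" using False strict by blast
  have Jf: "finite J" unfolding J_def by auto
  obtain i where iJ: "i \<in> J" and shortest: "\<forall>j\<in>J. k!i \<le> k!j"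
  proof -
    let ?m = "Min ((\<lambda>j. k!j) ` J)"
    have "?m \<in> (\<lambda>j. k!j) ` J" using Jne Jf by auto
    then obtain i where "i \<in> J" "k!i = ?m" by auto
    moreover have "\<forall>j\<in>J. ?m \<le> k!j" using Jf by auto
    ultimately show ?thesis using that by auto
  qed
  have i: "i < length x" using iJ J_def by auto
  have "\<not> (x!i' \<le> p \<and> p \<le> x!i' + k!i')"
    if i': "i' < length x" "i' \<noteq> i" "x!i \<le> x!i'" "x!i' + k!i' \<le> x!i + k!i" for i'
  proof
    assume "x!i' \<le> p \<and> p \<le> x!i' + k!i'"
    then have "k!i \<le> k!i'" using strict i' shortest by auto
    then have "x!i' = x!i" using i' by auto
    then show False using sorted_nth_inj i i' by metis
  qed
  then have "p \<in> region N x k (Suc i)" using iJ J_def by auto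
  then show ?thesis using i by (intro exI[of _ "Suc i"]) auto
qed

lemma region_disjoint:
  assumes il: "i \<le> length x" and jl: "j \<le> length x" and ij: "i \<noteq> j"
  shows "region N x k i \<inter> region N x k j = {}"
proof -
  have main: "region N x k (Suc a) \<inter> region N x k (Suc b) = {}"
    if a: "a < length x" and b: "b < length x" and ab: "a \<noteq> b" and lt: "x!a < x!b" for a b
  proof (rule ccontr)
    assume "region N x k (Suc a) \<inter> region N x k (Suc b) \<noteq> {}"
    then obtain p where pa: "p \<in> region N x k (Suc a)" and pb: "p \<in> region N x k (Suc b)" by blast
    have p1: "x!b < p" "p < x!a + k!a" using pa pb by auto
    show False
    proof (cases "x!b + k!b \<le> x!a + k!a")
      case True
      then show False using pa pb b ab lt by auto
    next
      case False
      then show False using catalan_matching_no_crossing[OF M has_arcsD[OF a] has_arcsD[OF b]] lt p1 by auto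
    qed
  qed
  show ?thesis
  proof (cases "i = 0 \<or> j = 0")
    case True
    have z: "region N x k 0 \<inter> region N x k (Suc b) = {}" if b: "b < length x" for b
    proof -
      { fix p assume p0: "p \<in> region N x k 0" and ps: "p \<in> region N x k (Suc b)"
        have "\<not> (x!b \<le> p \<and> p \<le> x!b + k!b)" using p0 b by auto
        then have False using ps by auto }
      then show ?thesis by blast
    qed
    show ?thesis
    proof (cases "i = 0")
      case True
      then obtain b where "j = Suc b" using ij by (cases j) auto
      then show ?thesis using z[of b] True jl by auto
    next
      case False
      then have "j = 0" using \<open>i = 0 \<or> j = 0\<close> by auto
      obtain b where "i = Suc b" using False by (cases i) auto
      then show ?thesis using z[of b] \<open>j = 0\<close> il by auto
    qed
  next
    case False
    then obtain a b where ia: "i = Suc a" and jb: "j = Suc b" by (meson not0_implies_Suc)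
    have a: "a < length x" and b: "b < length x" using il jl ia jb by auto
    have ab: "a \<noteq> b" using ij ia jb by auto
    have "x!a \<noteq> x!b" using sorted_nth_inj a b ab by metis
    then show ?thesis using main[OF a b ab] main[OF b a ab[symmetric]] ia jb
      by (cases "x!a < x!b") (auto simp: Int_commute)
  qed
qed

lemma Restr_region_catalan:
  assumes i: "i \<le> length x"
  shows "Restr M (P \<inter> region N x k i) \<in> catalan_matchings (P \<inter> region N x k i)"
proof (rule catalan_matchings_Restr[OF M])
  fix r q assume r: "r \<in> P \<inter> region N x k i" and rq: "matched M r q"
  have "q \<in> P" using rq catalan_matching_arcD[OF M] unfolding matched_def by blast
  then show "q \<in> P \<inter> region N x k i" using region_partner[OF rq i] r by blast
qed auto

lemma matching_eq_arcs_Un_regions: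
  "M = {(x!i, x!i + k!i) | i. i < length x} \<union> (\<Union>i\<in>{0..length x}. Restr M (P \<inter> region N x k i))"
proof (intro equalityI subsetI)
  fix ab assume "ab \<in> M"
  then obtain a b where ab: "ab = (a, b)" "(a, b) \<in> M" by (cases ab) auto
  then have aP: "a \<in> P" and bP: "b \<in> P" and lt: "a < b" using catalan_matching_arcD[OF M] by auto
  have mab: "matched M a b" using ab by (simp add: matched_def)
  show "ab \<in> {(x!i, x!i + k!i) | i. i < length x} \<union> (\<Union>i\<in>{0..length x}. Restr M (P \<inter> region N x k i))"
  proof (cases "not_endpoint x k a")
    case True
    obtain i where i: "i \<le> length x" "a \<in> region N x k i"
      using region_cover[OF aP True] by auto
    then have "(a, b) \<in> Restr M (P \<inter> region N x k i)"
      using region_partner[OF mab i] ab(2) aP bP by simp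
    then show ?thesis unfolding ab(1) using i(1) by (intro UnI2 UN_I[of i]) auto
  next
    case False
    then obtain j where j: "j < length x" and a: "a = x!j \<or> a = x!j + k!j"
      unfolding not_endpoint_def by auto
    from a have "a = x!j \<and> b = x!j + k!j"
    proof
      assume "a = x!j"
      then show ?thesis using matched_arc_start[OF j] mab by simp
    next
      assume "a = x!j + k!j"
      then have "b = x!j" using matched_arc_end[OF j] mab by simp
      then show ?thesis using \<open>a = x!j + k!j\<close> lt by simp
    qed
    then show ?thesis unfolding ab(1) using j by (intro UnI1) auto
  qed
next
  fix ab
  assume "ab \<in> {(x!i, x!i + k!i) | i. i < length x} \<union> (\<Union>i\<in>{0..length x}. Restr M (P \<inter> region N x k i))"
  then show "ab \<in> M" using has_arcsD by blast
qed

lemma sum_card_regions_le: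
  assumes "finite P"
  shows "(\<Sum>i\<in>{0..length x}. card (P \<inter> region N x k i)) \<le> card P"
proof -
  have "(\<Sum>i\<in>{0..length x}. card (P \<inter> region N x k i)) = card (\<Union>i\<in>{0..length x}. P \<inter> region N x k i)"
  proof (rule card_UN_disjoint[symmetric])
    show "\<forall>i\<in>{0..length x}. \<forall>j\<in>{0..length x}. i \<noteq> j \<longrightarrow> (P \<inter> region N x k i) \<inter> (P \<inter> region N x k j) = {}"
      using region_disjoint
      by (metis (no_types, lifting) Int_assoc Int_commute Int_empty_right atLeastAtMost_iff inf_left_commute)
  qed (use assms in auto)
  also have "\<dots> \<le> card P" using assms by (intro card_mono) auto
  finally show ?thesis .
qed

end

lemma card_matchings_with_arcs_le:
  assumes fP: "finite P" and sorted: "sorted_wrt (<) x" and PN: "P \<subseteq> {1..N}"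
  shows "card {M \<in> catalan_matchings P. has_arcs x k M}
           \<le> (\<Prod>i\<in>{0..length x}. card (catalan_matchings (P \<inter> region N x k i)))"
proof -
  let ?S = "{M \<in> catalan_matchings P. has_arcs x k M}"
  let ?B = "PiE {0..length x} (\<lambda>i. catalan_matchings (P \<inter> region N x k i))"
  define restrictions where
    "restrictions M = restrict (\<lambda>i. Restr M (P \<inter> region N x k i)) {0..length x}" for M
  have "restrictions ` ?S \<subseteq> ?B"
  proof (rule image_subsetI)
    fix M assume "M \<in> ?S"
    then have "Restr M (P \<inter> region N x k i) \<in> catalan_matchings (P \<inter> region N x k i)"
      if "i \<in> {0..length x}" for i
      using Restr_region_catalan[OF _ _ sorted PN, of M k i] that by simp
    then show "restrictions M \<in> ?B"
      unfolding restrictions_def by (simp add: restrict_PiE_iff)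
  qed
  moreover have "inj_on restrictions ?S"
  proof (rule inj_onI)
    fix M1 M2 assume "M1 \<in> ?S" "M2 \<in> ?S" and "restrictions M1 = restrictions M2"
    have eq: "Restr M1 (P \<inter> region N x k i) = Restr M2 (P \<inter> region N x k i)"
      if "i \<in> {0..length x}" for i
    proof -
      have "restrictions M1 i = restrictions M2 i" using \<open>restrictions M1 = restrictions M2\<close> by simp
      then show ?thesis using that by (simp add: restrictions_def)
    qed
    have M1: "M1 \<in> catalan_matchings P" "has_arcs x k M1"
      and M2: "M2 \<in> catalan_matchings P" "has_arcs x k M2"
      using \<open>M1 \<in> ?S\<close> \<open>M2 \<in> ?S\<close> by auto
    have Un_eq: "(\<Union>i\<in>{0..length x}. Restr M1 (P \<inter> region N x k i))
        = (\<Union>i\<in>{0..length x}. Restr M2 (P \<inter> region N x k i))"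
      by (rule SUP_cong[OF refl eq])
    have "M1 = {(x!i, x!i + k!i) | i. i < length x} \<union> (\<Union>i\<in>{0..length x}. Restr M1 (P \<inter> region N x k i))"
      by (rule matching_eq_arcs_Un_regions[OF M1 sorted PN])
    also have "\<dots> = M2"
      unfolding Un_eq by (rule matching_eq_arcs_Un_regions[OF M2 sorted PN, symmetric])
    finally show "M1 = M2" .
  qed
  moreover have "finite ?B" using fP by (intro finite_PiE) (auto intro: finite_catalan_matchings)
  ultimately have "card ?S \<le> card ?B" by (intro card_inj_on_le)
  also have "card ?B = (\<Prod>i\<in>{0..length x}. card (catalan_matchings (P \<inter> region N x k i)))"
    by (rule card_PiE) simp
  finally show ?thesis .
qed

section \<open>Matchings containing prescribed arcs\<close>

definition arc_fraction :: "nat set \<Rightarrow> nat list \<Rightarrow> nat list \<Rightarrow> real" where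
  "arc_fraction P x k =
     real (card {M \<in> catalan_matchings P. has_arcs x k M}) / real (card (catalan_matchings P))"

lemma arc_fraction_nonneg_le_1:
  assumes "finite P"
  shows "0 \<le> arc_fraction P x k \<and> arc_fraction P x k \<le> 1"
proof -
  have "card {M \<in> catalan_matchings P. has_arcs x k M} \<le> card (catalan_matchings P)"
    by (rule card_mono[OF finite_catalan_matchings[OF assms]]) auto
  then show ?thesis unfolding arc_fraction_def
    by (cases "card (catalan_matchings P) = 0") (auto simp: divide_le_eq_1)
qed

text \<open>Each region carries its own non-crossing matching, whose number is a Catalan number
  \<open>\<le> 4^q (q + 1)^(-3/2)\<close>, and the half-sizes of the regions add up to at most \<open>card P div 2\<close>.\<close>
lemma card_matchings_with_arcs_le_regions:
  assumes fP: "finite P" and sorted: "sorted_wrt (<) x" and PN: "P \<subseteq> {1..N}"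
  shows "real (card {M \<in> catalan_matchings P. has_arcs x k M})
     \<le> 4 ^ (card P div 2) * (\<Prod>i\<in>{0..length x}. (real (card (P \<inter> region N x k i) div 2) + 1) powr (-3/2))"
    (is "_ \<le> _ * ?W")
proof (cases "{M \<in> catalan_matchings P. has_arcs x k M} = {}")
  case True
  have "0 \<le> 4 ^ (card P div 2) * ?W" by (intro mult_nonneg_nonneg prod_nonneg) auto
  then show ?thesis by (simp only: True card.empty of_nat_0)
next
  case False
  then obtain M0 where M0: "M0 \<in> catalan_matchings P" "has_arcs x k M0" by auto
  define q where "q i = card (P \<inter> region N x k i)" for i
  define D where "D = (\<Sum>i\<in>{0..length x}. q i div 2)"
  have "2 * D \<le> (\<Sum>i\<in>{0..length x}. q i)"
    unfolding D_def sum_distrib_left by (rule sum_mono) simp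
  also have "\<dots> \<le> card P"
    unfolding q_def using sum_card_regions_le[OF M0 sorted PN fP] .
  finally have "D \<le> card P div 2" by linarith
  have "real (card {M \<in> catalan_matchings P. has_arcs x k M})
      \<le> (\<Prod>i\<in>{0..length x}. real (card (catalan_matchings (P \<inter> region N x k i))))"
    unfolding of_nat_prod[symmetric] of_nat_le_iff by (rule card_matchings_with_arcs_le[OF fP sorted PN])
  also have "\<dots> \<le> (\<Prod>i\<in>{0..length x}. 4 ^ (q i div 2) * (real (q i div 2) + 1) powr (-3/2))"
    using card_catalan_matchings_upper fP unfolding q_def by (intro prod_mono) auto
  also have "\<dots> = 4 ^ D * ?W"
    by (simp add: prod.distrib D_def power_sum q_def)
  also have "\<dots> \<le> 4 ^ (card P div 2) * ?W"
    using \<open>D \<le> card P div 2\<close> by (intro mult_right_mono power_increasing) (auto intro: prod_nonneg)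
  finally show ?thesis .
qed

lemma arc_fraction_le_regions:
  assumes fP: "finite P" and sorted: "sorted_wrt (<) x" and PN: "P \<subseteq> {1..N}"
    and ev: "even (card P)"
  shows "arc_fraction P x k
     \<le> 2 * (real (card P div 2) + 1) powr (3/2) *
        (\<Prod>i\<in>{0..length x}. (real (card (P \<inter> region N x k i) div 2) + 1) powr (-3/2))"
    (is "_ \<le> 2 * ?A * ?W")
proof -
  have "0 < 4 ^ (card P div 2) * (1 / ?A) / 2" by simp
  moreover have "4 ^ (card P div 2) * (1 / ?A) / 2 \<le> real (card (catalan_matchings P))"
    using card_catalan_matchings_lower[OF fP ev] by (simp add: powr_minus_divide)
  ultimately have "arc_fraction P x k \<le> 4 ^ (card P div 2) * ?W / (4 ^ (card P div 2) * (1 / ?A) / 2)"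
    unfolding arc_fraction_def
    by (intro frac_le card_matchings_with_arcs_le_regions[OF fP sorted PN]) (auto intro!: mult_nonneg_nonneg prod_nonneg)
  also have "\<dots> = 2 * ?A * ?W" by (simp add: field_simps)
  finally show ?thesis .
qed

lemma prod_le_prod_subset:
  fixes w :: "nat \<Rightarrow> real"
  assumes "finite A" "S \<subseteq> A" "\<forall>i\<in>A. 0 \<le> w i \<and> w i \<le> 1"
  shows "(\<Prod>i\<in>A. w i) \<le> (\<Prod>i\<in>S. w i)"
proof -
  have "(\<Prod>i\<in>A. w i) = (\<Prod>i\<in>A - S. w i) * (\<Prod>i\<in>S. w i)"
    using prod.subset_diff[OF assms(2,1)] by simp
  also have "\<dots> \<le> 1 * (\<Prod>i\<in>S. w i)"
  proof (rule mult_right_mono)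
    show "(\<Prod>i\<in>A - S. w i) \<le> 1" using assms(3) by (intro prod_le_1) auto
    show "0 \<le> (\<Prod>i\<in>S. w i)" using assms by (intro prod_nonneg) auto
  qed
  finally show ?thesis by simp
qed

lemma half_plus_one_powr_le:
  assumes h: "h > 0" and q: "h / 16 \<le> real q"
  shows "(real (q div 2) + 1) powr (-3/2) \<le> 32 powr (3/2) * h powr (-3/2)"
proof -
  have "h / 32 \<le> real (q div 2) + 1"
  proof -
    have "real q \<le> 2 * real (q div 2) + 1" by linarith
    then show ?thesis using q by linarith
  qed
  then have "(real (q div 2) + 1) powr (-3/2) \<le> (h / 32) powr (-3/2)"
    using h by (intro powr_mono2') auto
  also have "(h / 32) powr (-3/2) = h powr (-3/2) / 32 powr (-3/2)"
    using h by (simp add: powr_divide)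
  also have "\<dots> = 32 powr (3/2) * h powr (-3/2)" by (simp add: powr_minus field_simps)
  finally show ?thesis .
qed

lemma arc_fraction_le_large_regions:
  assumes fP: "finite P" and PN: "P \<subseteq> {1..2*n}" and ev: "even (card P)" and sorted: "sorted_wrt (<) x"
    and n1: "n \<ge> 1"
    and S: "S \<subseteq> {0..length x}" and hpos: "\<forall>i\<in>S. h i > 0"
    and hq: "\<forall>i\<in>S. h i / 16 \<le> real (card (P \<inter> region (2*n) x k i))"
  shows "arc_fraction P x k \<le> 2 * (2 * real n) powr (3/2) * (32 powr (3/2)) ^ (length x + 1) * (\<Prod>i\<in>S. h i powr (-3/2))"
proof -
  define w where "w i = (real (card (P \<inter> region (2*n) x k i) div 2) + 1) powr (-3/2)" for i
  have rb: "arc_fraction P x k \<le> 2 * (real (card P div 2) + 1) powr (3/2) * (\<Prod>i\<in>{0..length x}. w i)"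
    unfolding w_def by (rule arc_fraction_le_regions[OF fP sorted PN ev])
  have w01: "\<forall>i\<in>{0..length x}. 0 \<le> w i \<and> w i \<le> 1"
  proof
    fix i
    have "1 \<le> real (card (P \<inter> region (2*n) x k i) div 2) + 1" by simp
    then have "(real (card (P \<inter> region (2*n) x k i) div 2) + 1) powr (-3/2)
        \<le> (real (card (P \<inter> region (2*n) x k i) div 2) + 1) powr 0"
      by (intro powr_mono) auto
    then have "(real (card (P \<inter> region (2*n) x k i) div 2) + 1) powr (-3/2) \<le> 1" by simp
    then show "0 \<le> w i \<and> w i \<le> 1" unfolding w_def by simp
  qed
  have cP: "card P \<le> 2 * n" using card_mono[OF _ PN] by simp
  have "real (card P div 2) + 1 \<le> 2 * real n"
  proof -
    have "card P div 2 \<le> n" using cP by linarith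
    then show ?thesis using n1 by linarith
  qed
  then have A: "(real (card P div 2) + 1) powr (3/2) \<le> (2 * real n) powr (3/2)"
    by (intro powr_mono2) auto
  have "(\<Prod>i\<in>{0..length x}. w i) \<le> (\<Prod>i\<in>S. w i)"
    by (rule prod_le_prod_subset[OF _ S w01]) simp
  also have "\<dots> \<le> (\<Prod>i\<in>S. 32 powr (3/2) * h i powr (-3/2))"
  proof (rule prod_mono)
    fix i assume i: "i \<in> S"
    show "0 \<le> w i \<and> w i \<le> 32 powr (3/2) * h i powr (-3/2)"
      using w01 S i half_plus_one_powr_le[of "h i" "card (P \<inter> region (2*n) x k i)"] hpos hq unfolding w_def by auto
  qed
  also have "\<dots> = (32 powr (3/2)) ^ card S * (\<Prod>i\<in>S. h i powr (-3/2))"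
    by (simp add: prod.distrib)
  also have "\<dots> \<le> (32 powr (3/2)) ^ (length x + 1) * (\<Prod>i\<in>S. h i powr (-3/2))"
  proof (rule mult_right_mono)
    have "card S \<le> card {0..length x}" using S by (intro card_mono) auto
    then have "card S \<le> length x + 1" by simp
    then show "(32 powr (3/2) :: real) ^ card S \<le> (32 powr (3/2)) ^ (length x + 1)" by (intro power_increasing) (auto simp: ge_one_powr_ge_zero)
    show "0 \<le> (\<Prod>i\<in>S. h i powr (-3/2))" by (intro prod_nonneg) auto
  qed
  finally have W: "(\<Prod>i\<in>{0..length x}. w i) \<le> (32 powr (3/2)) ^ (length x + 1) * (\<Prod>i\<in>S. h i powr (-3/2))" .
  have Wnn: "0 \<le> (\<Prod>i\<in>{0..length x}. w i)" using w01 by (intro prod_nonneg) auto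
  have "2 * (real (card P div 2) + 1) powr (3/2) * (\<Prod>i\<in>{0..length x}. w i)
      \<le> 2 * (2 * real n) powr (3/2) * ((32 powr (3/2)) ^ (length x + 1) * (\<Prod>i\<in>S. h i powr (-3/2)))"
    using A W Wnn by (intro mult_mono) auto
  then show ?thesis using rb by (simp add: mult.assoc)
qed

section \<open>Averaging over the colouring\<close>

lemma measure_pmf_prob_bind:
  "measure_pmf.prob (bind_pmf M f) X = (\<integral>x. measure_pmf.prob (f x) X \<partial>measure_pmf M)"
  by (simp add: measure_pmf_bind measure_pmf.measure_bind[where N="count_space UNIV"] measure_subprob)

lemma integral_pmf_of_set_indicator:
  assumes "finite S" "S \<noteq> {}"
  shows "(\<integral>z. (if z \<in> X then c else 0) \<partial>measure_pmf (pmf_of_set S)) = real (card (S \<inter> X)) * c / real (card S)"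
proof -
  have "(\<integral>z. (if z \<in> X then c else 0) \<partial>measure_pmf (pmf_of_set S)) = (\<Sum>z\<in>S. if z \<in> X then c else 0) / real (card S)"
    using assms by (simp add: integral_pmf_of_set)
  also have "(\<Sum>z\<in>S. if z \<in> X then c else 0) = (\<Sum>z\<in>S \<inter> X. c)"
    using sum.inter_restrict[OF assms(1), of "\<lambda>_. c" X] by simp
  also have "\<dots> = real (card (S \<inter> X)) * c" by simp
  finally show ?thesis .
qed

lemma prob_pmf_of_set_pair:
  assumes fR: "finite SR" "SR \<noteq> {}" and fB: "finite SB" "SB \<noteq> {}"
  shows "measure_pmf.prob (pmf_of_set SR \<bind> (\<lambda>Mr. pmf_of_set SB \<bind> (\<lambda>Mb. return_pmf (R, Mr, Mb))))
           {(R', Mr, Mb). Mr \<in> X \<and> Mb \<in> Y}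
         = real (card (SR \<inter> X)) / real (card SR) * (real (card (SB \<inter> Y)) / real (card SB))"
proof -
  have in1: "measure_pmf.prob (pmf_of_set SB \<bind> (\<lambda>Mb. return_pmf (R, Mr, Mb))) {(R', Mr, Mb). Mr \<in> X \<and> Mb \<in> Y}
      = (if Mr \<in> X then real (card (SB \<inter> Y)) / real (card SB) else 0)" for Mr
  proof -
    have "measure_pmf.prob (pmf_of_set SB \<bind> (\<lambda>Mb. return_pmf (R, Mr, Mb))) {(R', Mr, Mb). Mr \<in> X \<and> Mb \<in> Y}
        = (\<integral>Mb. (if Mb \<in> Y then (if Mr \<in> X then 1 else 0) else 0) \<partial>measure_pmf (pmf_of_set SB))"
      unfolding measure_pmf_prob_bind measure_return_pmf by (rule Bochner_Integration.integral_cong) (auto simp: indicator_def)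
    also have "\<dots> = real (card (SB \<inter> Y)) * (if Mr \<in> X then 1 else 0) / real (card SB)"
      by (rule integral_pmf_of_set_indicator[OF fB])
    finally show ?thesis by simp
  qed
  have "measure_pmf.prob (pmf_of_set SR \<bind> (\<lambda>Mr. pmf_of_set SB \<bind> (\<lambda>Mb. return_pmf (R, Mr, Mb))))
           {(R', Mr, Mb). Mr \<in> X \<and> Mb \<in> Y}
      = (\<integral>Mr. (if Mr \<in> X then real (card (SB \<inter> Y)) / real (card SB) else 0) \<partial>measure_pmf (pmf_of_set SR))"
    unfolding measure_pmf_prob_bind[of "pmf_of_set SR"] in1 ..
  also have "\<dots> = real (card (SR \<inter> X)) * (real (card (SB \<inter> Y)) / real (card SB)) / real (card SR)"
    by (rule integral_pmf_of_set_indicator[OF fR])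
  finally show ?thesis by simp
qed

definition red_points :: "nat \<Rightarrow> nat set \<Rightarrow> nat set" where
  "red_points n C = (if even (card C) then C else insert (2*n) C)"

lemma red_points_properties:
  assumes C: "C \<subseteq> {1..<2*n}"
  shows "red_points n C \<subseteq> {1..2*n}" "even (card (red_points n C))" "finite (red_points n C)"
    "even (card ({1..2*n} - red_points n C))" "C \<subseteq> red_points n C" "red_points n C \<inter> {1..<2*n} = C"
proof -
  have fC: "finite C" using C finite_subset by blast
  have n2: "2*n \<notin> C" using C by auto
  show sub: "red_points n C \<subseteq> {1..2*n}"
  proof (cases "even (card C)")
    case True then show ?thesis using C by (auto simp: red_points_def)
  next
    case False
    then have "C \<noteq> {}" by auto
    then have "n \<ge> 1" using C by auto
    then show ?thesis using C False by (auto simp: red_points_def)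
  qed
  show ev: "even (card (red_points n C))" using fC n2 by (auto simp: red_points_def)
  show "finite (red_points n C)" using fC by (auto simp: red_points_def)
  have "card ({1..2*n} - red_points n C) = 2*n - card (red_points n C)"
    using sub by (simp add: card_Diff_subset finite_subset)
  moreover have "card (red_points n C) \<le> 2*n" using sub card_mono[of "{1..2*n}"] by fastforce
  ultimately show "even (card ({1..2*n} - red_points n C))" using ev by auto
  show "C \<subseteq> red_points n C" by (auto simp: red_points_def)
  show "red_points n C \<inter> {1..<2*n} = C" using C by (auto simp: red_points_def)
qed

text \<open>The parity conditions of \<open>event_A\<close> are dropped: only the prescribed arcs are used.\<close>
lemma prob_event_A_le_average:
  "measure_pmf.prob (CP n) (event_A n x k y l)
    \<le> (\<Sum>C\<in>Pow {1..<2*n}. arc_fraction (red_points n C) x k * arc_fraction ({1..2*n} - red_points n C) y l) / real (card (Pow {1..<2*n}))"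
proof -
  define E where "E = {(R'::nat set, Mr, Mb). Mr \<in> {M. has_arcs x k M} \<and> Mb \<in> {M. has_arcs y l M}}"
  have e1: "{M \<in> catalan_matchings P. has_arcs x k M} = catalan_matchings P \<inter> {M. has_arcs x k M}" for P by auto
  have e2: "{M \<in> catalan_matchings P. has_arcs y l M} = catalan_matchings P \<inter> {M. has_arcs y l M}" for P by auto
  have sub: "event_A n x k y l \<subseteq> E" unfolding event_A_def E_def has_arcs_def by auto
  have "measure_pmf.prob (CP n) (event_A n x k y l) \<le> measure_pmf.prob (CP n) E"
    by (rule measure_pmf.finite_measure_mono[OF sub]) simp
  also have "measure_pmf.prob (CP n) E
      = (\<Sum>C\<in>Pow {1..<2*n}. measure_pmf.prob (let R = if even (card C) then C else insert (2 * n) C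
                in pmf_of_set (catalan_matchings R) \<bind> (\<lambda>Mr. pmf_of_set (catalan_matchings ({1..2 * n} - R)) \<bind> (\<lambda>Mb. return_pmf (R, Mr, Mb)))) E) / real (card (Pow {1..<2*n}))"
    unfolding CP_def measure_pmf_prob_bind[of "pmf_of_set (Pow {1..<2*n})"]
    by (rule integral_pmf_of_set) auto
  also have "\<dots> = (\<Sum>C\<in>Pow {1..<2*n}. arc_fraction (red_points n C) x k * arc_fraction ({1..2*n} - red_points n C) y l) / real (card (Pow {1..<2*n}))"
  proof (rule arg_cong[where f = "\<lambda>z. z / real (card (Pow {1..<2*n}))"], rule sum.cong[OF refl])
    fix C assume "C \<in> Pow {1..<2*n}"
    then have C: "C \<subseteq> {1..<2*n}" by auto
    note rp = red_points_properties[OF C]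
    have fB: "finite ({1..2*n} - red_points n C)" by simp
    show "measure_pmf.prob (let R = if even (card C) then C else insert (2 * n) C
              in pmf_of_set (catalan_matchings R) \<bind> (\<lambda>Mr. pmf_of_set (catalan_matchings ({1..2 * n} - R)) \<bind> (\<lambda>Mb. return_pmf (R, Mr, Mb)))) E
      = arc_fraction (red_points n C) x k * arc_fraction ({1..2*n} - red_points n C) y l"
      unfolding red_points_def[symmetric] Let_def E_def arc_fraction_def e1 e2
      by (rule prob_pmf_of_set_pair[OF finite_catalan_matchings[OF rp(3)] catalan_matchings_nonempty[OF rp(3) rp(2)]
            finite_catalan_matchings[OF fB] catalan_matchings_nonempty[OF fB rp(4)]])
  qed
  finally show ?thesis .
qed

lemma sum_Pow_power_card_Int:
  fixes \<theta> :: real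
  assumes "finite U"
  shows "(\<Sum>C\<in>Pow U. \<theta> ^ card (C \<inter> F)) = (1 + \<theta>) ^ card (U \<inter> F) * 2 ^ card (U - F)"
  using assms
proof (induction U rule: finite_induct)
  case empty then show ?case by simp
next
  case (insert u U)
  have inj: "inj_on (insert u) (Pow U)" using insert.hyps(2)
    by (intro inj_onI) (metis Pow_iff insert_ident subsetD)
  have disj: "Pow U \<inter> insert u ` Pow U = {}" using insert.hyps(2) by auto
  have fin: "finite (Pow U)" "finite (insert u ` Pow U)" using insert.hyps(1) by auto
  have "(\<Sum>C\<in>Pow (insert u U). \<theta> ^ card (C \<inter> F))
      = (\<Sum>C\<in>Pow U. \<theta> ^ card (C \<inter> F)) + (\<Sum>C\<in>insert u ` Pow U. \<theta> ^ card (C \<inter> F))"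
    unfolding Pow_insert by (rule sum.union_disjoint[OF fin disj])
  also have "(\<Sum>C\<in>insert u ` Pow U. \<theta> ^ card (C \<inter> F)) = (\<Sum>C\<in>Pow U. \<theta> ^ card (insert u C \<inter> F))"
    by (rule sum.reindex[OF inj, unfolded comp_def])
  also have "\<dots> = (\<Sum>C\<in>Pow U. (if u \<in> F then \<theta> else 1) * \<theta> ^ card (C \<inter> F))"
  proof (rule sum.cong[OF refl])
    fix C assume "C \<in> Pow U"
    then have uC: "u \<notin> C" using insert.hyps(2) by auto
    have fC: "finite (C \<inter> F)" using \<open>C \<in> Pow U\<close> insert.hyps(1) finite_subset by auto
    show "\<theta> ^ card (insert u C \<inter> F) = (if u \<in> F then \<theta> else 1) * \<theta> ^ card (C \<inter> F)"
      using uC fC by (cases "u \<in> F") auto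
  qed
  also have "\<dots> = (if u \<in> F then \<theta> else 1) * (\<Sum>C\<in>Pow U. \<theta> ^ card (C \<inter> F))"
    by (simp add: sum_distrib_left)
  finally have e: "(\<Sum>C\<in>Pow (insert u U). \<theta> ^ card (C \<inter> F)) = (1 + (if u \<in> F then \<theta> else 1)) * (\<Sum>C\<in>Pow U. \<theta> ^ card (C \<inter> F))"
    by (simp add: algebra_simps)
  show ?case
  proof (cases "u \<in> F")
    case True
    have "card (insert u U \<inter> F) = Suc (card (U \<inter> F))" using True insert by auto
    moreover have "insert u U - F = U - F" using True by auto
    ultimately show ?thesis using e insert.IH True by simp
  next
    case False
    have "insert u U \<inter> F = U \<inter> F" using False by auto
    moreover have "card (insert u U - F) = Suc (card (U - F))"
    proof -
      have "insert u U - F = insert u (U - F)" using False by auto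
      then show ?thesis using insert.hyps by simp
    qed
    ultimately show ?thesis using e insert.IH False by simp
  qed
qed

lemma card_few_in_le:
  fixes f :: real
  assumes fU: "finite U"
  shows "real (card {C \<in> Pow U. 16 * real (card (C \<inter> F)) < f}) / 2 ^ card U
           \<le> 2 powr (f / 16) * (3/4) ^ card (U \<inter> F)"
proof -
  let ?B = "{C \<in> Pow U. 16 * real (card (C \<inter> F)) < f}"
  have one: "1 \<le> (1/2) ^ card (C \<inter> F) * 2 powr (f / 16)" if C: "C \<in> ?B" for C
  proof -
    have "real (card (C \<inter> F)) < f / 16" using C by auto
    then have "2 powr real (card (C \<inter> F)) \<le> 2 powr (f / 16)" by (intro powr_mono) auto
    then have "2 ^ card (C \<inter> F) \<le> 2 powr (f / 16)" by (simp add: powr_realpow)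
    then show ?thesis by (simp add: power_one_over field_simps)
  qed
  have "real (card ?B) = (\<Sum>C\<in>?B. 1)" by simp
  also have "\<dots> \<le> (\<Sum>C\<in>?B. (1/2) ^ card (C \<inter> F) * 2 powr (f / 16))"
    by (rule sum_mono[OF one])
  also have "\<dots> \<le> (\<Sum>C\<in>Pow U. (1/2) ^ card (C \<inter> F) * 2 powr (f / 16))"
    by (rule sum_mono2) (use fU in auto)
  also have "\<dots> = 2 powr (f / 16) * ((3/2) ^ card (U \<inter> F) * 2 ^ card (U - F))"
    using sum_Pow_power_card_Int[OF fU, of "1/2" F] by (simp add: sum_distrib_right[symmetric] mult.commute)
  finally have b: "real (card ?B) \<le> 2 powr (f / 16) * ((3/2) ^ card (U \<inter> F) * 2 ^ card (U - F))" .
  have cu: "card U = card (U \<inter> F) + card (U - F)"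
  proof -
    have "U = (U \<inter> F) \<union> (U - F)" by auto
    then have "card U = card ((U \<inter> F) \<union> (U - F))" by simp
    also have "\<dots> = card (U \<inter> F) + card (U - F)" by (rule card_Un_disjoint) (use fU in auto)
    finally show ?thesis .
  qed
  have "2 powr (f / 16) * ((3/2) ^ card (U \<inter> F) * 2 ^ card (U - F)) / 2 ^ card U
      = 2 powr (f / 16) * ((3/2) ^ card (U \<inter> F) / 2 ^ card (U \<inter> F))"
    unfolding cu by (simp add: power_add)
  also have "\<dots> = 2 powr (f / 16) * (3/4) ^ card (U \<inter> F)"
  proof -
    have "(3/2::real) ^ card (U \<inter> F) / 2 ^ card (U \<inter> F) = ((3/2) / 2) ^ card (U \<inter> F)"
      by (rule power_divide[symmetric])
    also have "(3/2::real) / 2 = 3/4" by simp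
    finally show ?thesis by simp
  qed
  finally have e: "2 powr (f / 16) * ((3/2) ^ card (U \<inter> F) * 2 ^ card (U - F)) / 2 ^ card U = 2 powr (f / 16) * (3/4) ^ card (U \<inter> F)" .
  have "real (card ?B) / 2 ^ card U \<le> 2 powr (f / 16) * ((3/2) ^ card (U \<inter> F) * 2 ^ card (U - F)) / 2 ^ card U"
    by (rule divide_right_mono[OF b]) simp
  then show ?thesis unfolding e .
qed

lemma card_Pow_complement:
  assumes fU: "finite U"
  shows "card {C \<in> Pow U. P (U - C)} = card {C \<in> Pow U. P C}"
proof -
  have "{C \<in> Pow U. P (U - C)} = (\<lambda>D. U - D) ` {C \<in> Pow U. P C}"
  proof (intro equalityI subsetI)
    fix C assume "C \<in> {C \<in> Pow U. P (U - C)}"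
    then show "C \<in> (\<lambda>D. U - D) ` {C \<in> Pow U. P C}"
      by (intro image_eqI[of _ _ "U - C"]) auto
  next
    fix C assume "C \<in> (\<lambda>D. U - D) ` {C \<in> Pow U. P C}"
    then obtain D where D: "D \<subseteq> U" "P D" "C = U - D" by auto
    have "U - (U - D) = D" using D(1) by auto
    then show "C \<in> {C \<in> Pow U. P (U - C)}" using D by auto
  qed
  moreover have "inj_on (\<lambda>D. U - D) {C \<in> Pow U. P C}"
    by (intro inj_onI) auto
  ultimately show ?thesis by (simp add: card_image)
qed

lemma two_powr_three_quarters_le_exp:
  fixes f :: real and c :: nat
  assumes "real c = f" "f \<ge> 0"
  shows "2 powr (f / 16) * (3/4) ^ c \<le> exp (- f / 8)"
proof -
  have l2: "ln (2::real) \<le> 1" using ln_le_minus_one[of 2] by simp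
  have l34: "ln (3/4::real) \<le> -1/4" using ln_le_minus_one[of "3/4"] by simp
  have "2 powr (f / 16) = exp (f / 16 * ln 2)" by (simp add: powr_def)
  moreover have "(3/4::real) ^ c = exp (f * ln (3/4))"
    using assms(1) by (simp add: powr_realpow[symmetric] powr_def)
  ultimately have "2 powr (f / 16) * (3/4) ^ c = exp (f * (ln 2 / 16 + ln (3/4)))"
    by (simp add: exp_add[symmetric] algebra_simps)
  also have "\<dots> \<le> exp (- f / 8)"
  proof -
    have "ln 2 / 16 + ln (3/4) \<le> -(1/8::real)" using l2 l34 by linarith
    then have "f * (ln 2 / 16 + ln (3/4)) \<le> f * (-(1/8))" using assms(2) by (intro mult_left_mono) auto
    then show ?thesis by simp
  qed
  finally show ?thesis .
qed

lemma fraction_few_red_le: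
  assumes n2: "n \<ge> 2" and F: "F \<subseteq> {1..2*n}" and st: "(st::nat) \<ge> 1"
    and L: "real (card F) \<ge> 16 * real st * ln (real n)"
  shows "real (card {C \<in> Pow {1..<2*n}. 16 * real (card (C \<inter> F)) < real (card F)}) / 2 ^ card {1..<2*n}
          \<le> 4/3 * real n powr (- 2 * real st)"
proof -
  define U where "U = {1..<2*n}"
  define cF where "cF = card F"
  have fU: "finite U" unfolding U_def by simp
  have lnpos: "ln (real n) > 0" using n2 by simp
  have "16 * real st * ln (real n) > 0" using st lnpos by simp
  then have cF1: "cF \<ge> 1" using L cF_def by linarith
  have b1: "real (card {C \<in> Pow U. 16 * real (card (C \<inter> F)) < real cF}) / 2 ^ card U
      \<le> 2 powr (real cF / 16) * (3/4) ^ card (U \<inter> F)"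
    by (rule card_few_in_le[OF fU])
  have "F \<subseteq> insert (2*n) (U \<inter> F)" using F unfolding U_def by auto
  then have "cF \<le> card (insert (2*n) (U \<inter> F))" unfolding cF_def by (intro card_mono) (auto simp: U_def)
  also have "\<dots> \<le> card (U \<inter> F) + 1" by (simp add: card_insert_le_m1 card_insert_if)
  finally have cUF: "cF - 1 \<le> card (U \<inter> F)" by simp
  have "(3/4::real) ^ card (U \<inter> F) \<le> (3/4) ^ (cF - 1)" by (rule power_decreasing[OF cUF]) auto
  also have "\<dots> = 4/3 * (3/4) ^ cF"
  proof -
    have "(3/4::real) ^ cF = (3/4) * (3/4) ^ (cF - 1)" using cF1 by (metis Suc_diff_1 less_le_trans zero_less_one power_Suc)
    then show ?thesis by simp
  qed
  finally have p: "(3/4::real) ^ card (U \<inter> F) \<le> 4/3 * (3/4) ^ cF" .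
  have "2 powr (real cF / 16) * (3/4) ^ card (U \<inter> F) \<le> 2 powr (real cF / 16) * (4/3 * (3/4) ^ cF)"
    using p by (intro mult_left_mono) auto
  also have "\<dots> = 4/3 * (2 powr (real cF / 16) * (3/4) ^ cF)" by simp
  also have "\<dots> \<le> 4/3 * exp (- real cF / 8)"
    using two_powr_three_quarters_le_exp[of cF "real cF"] by (simp add: mult.commute)
  also have "\<dots> \<le> 4/3 * exp (- 2 * real st * ln (real n))"
    using L cF_def by simp
  also have "exp (- 2 * real st * ln (real n)) = real n powr (- 2 * real st)"
    using n2 by (simp add: powr_def)
  finally show ?thesis using b1 unfolding U_def cF_def by linarith
qed

lemma fraction_few_blue_le:
  assumes n2: "n \<ge> 2" and F: "F \<subseteq> {1..2*n}" and st: "(st::nat) \<ge> 1"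
    and L: "real (card F) \<ge> 16 * real st * ln (real n)"
  shows "real (card {C \<in> Pow {1..<2*n}. 16 * real (card (({1..<2*n} - C) \<inter> F)) < real (card F)})
           / 2 ^ card {1..<2*n} \<le> 4/3 * real n powr (- 2 * real st)"
  using fraction_few_red_le[OF assms]
    card_Pow_complement[of "{1..<2*n}" "\<lambda>D. 16 * real (card (D \<inter> F)) < real (card F)"] by simp

definition free_points :: "nat \<Rightarrow> nat list \<Rightarrow> nat list \<Rightarrow> nat list \<Rightarrow> nat list \<Rightarrow> nat \<Rightarrow> nat set" where
  "free_points n x k y l i = {p \<in> region (2 * n) x k i. not_endpoint y l p}"

lemma free_count_eq_card: "free_count n x k y l i = card (free_points n x k y l i)"
  by (cases i) (simp_all add: free_points_def not_endpoint_def conj_ac)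

lemma average_le_union_bound:
  fixes \<phi> :: "'a \<Rightarrow> real"
  assumes "finite A" "finite I" and \<phi>: "\<And>C. C \<in> A \<Longrightarrow> 0 \<le> \<phi> C \<and> \<phi> C \<le> 1"
    and good: "\<And>C. C \<in> A \<Longrightarrow> \<forall>i\<in>I. good i C \<Longrightarrow> \<phi> C \<le> B" and "0 \<le> B"
  shows "(\<Sum>C\<in>A. \<phi> C) \<le> real (card A) * B + (\<Sum>i\<in>I. real (card {C \<in> A. \<not> good i C}))"
proof -
  let ?bad = "{C \<in> A. \<exists>i\<in>I. \<not> good i C}"
  have "(\<Sum>C\<in>A. \<phi> C) \<le> (\<Sum>C\<in>A. B + (if C \<in> ?bad then 1 else 0))"
    using \<phi> good \<open>0 \<le> B\<close> by (intro sum_mono) (fastforce split: if_splits)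
  also have "\<dots> = real (card A) * B + real (card ?bad)"
    using \<open>finite A\<close> by (simp add: sum.distrib sum.If_cases Int_def conj_commute)
  also have "card ?bad \<le> (\<Sum>i\<in>I. card {C \<in> A. \<not> good i C})"
  proof -
    have "?bad = (\<Union>i\<in>I. {C \<in> A. \<not> good i C})" by auto
    then show ?thesis using card_UN_le[OF \<open>finite I\<close>] by simp
  qed
  finally show ?thesis by (simp flip: of_nat_sum)
qed

lemma arc_fraction_product_le:
  fixes f g :: "nat \<Rightarrow> real"
  assumes C: "C \<subseteq> {1..<2*n}" and n: "n \<ge> 1"
    and sorted: "sorted_wrt (<) x" "sorted_wrt (<) y"
    and S: "S \<subseteq> {0..length x}" "\<forall>i\<in>S. 0 < f i \<and> f i \<le> 16 * real (card (C \<inter> free_points n x k y l i))"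
    and T: "T \<subseteq> {0..length y}"
      "\<forall>j\<in>T. 0 < g j \<and> g j \<le> 16 * real (card (({1..<2*n} - C) \<inter> free_points n y l x k j))"
  shows "arc_fraction (red_points n C) x k * arc_fraction ({1..2*n} - red_points n C) y l
    \<le> 32 * (32 powr (3/2)) ^ (length x + 1) * (32 powr (3/2)) ^ (length y + 1) * real n ^ 3
       * (\<Prod>i\<in>S. f i powr (-3/2)) * (\<Prod>j\<in>T. g j powr (-3/2))"
proof -
  define R where "R = red_points n C"
  note R = red_points_properties[OF C, folded R_def]
  have blue: "{1..2*n} - R \<subseteq> {1..2*n}" "finite ({1..2*n} - R)" "even (card ({1..2*n} - R))"
    using R(4) by auto
  have "f i / 16 \<le> real (card (R \<inter> region (2 * n) x k i))" if "i \<in> S" for i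
  proof -
    have "card (C \<inter> free_points n x k y l i) \<le> card (R \<inter> region (2 * n) x k i)"
      using R(3,5) by (intro card_mono) (auto simp: free_points_def)
    then show ?thesis using S(2) that by auto
  qed
  then have red_bound: "arc_fraction R x k
      \<le> 2 * (2 * real n) powr (3/2) * (32 powr (3/2)) ^ (length x + 1) * (\<Prod>i\<in>S. f i powr (-3/2))"
    using S by (intro arc_fraction_le_large_regions[OF R(3,1,2) sorted(1) n]) auto
  have "g j / 16 \<le> real (card (({1..2*n} - R) \<inter> region (2 * n) y l j))" if "j \<in> T" for j
  proof -
    have "{1..<2*n} - C \<subseteq> {1..2*n} - R" using R(6) by auto
    then have "card (({1..<2*n} - C) \<inter> free_points n y l x k j) \<le> card (({1..2*n} - R) \<inter> region (2 * n) y l j)"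
      by (intro card_mono) (auto simp: free_points_def)
    then show ?thesis using T(2) that by auto
  qed
  then have blue_bound: "arc_fraction ({1..2*n} - R) y l
      \<le> 2 * (2 * real n) powr (3/2) * (32 powr (3/2)) ^ (length y + 1) * (\<Prod>j\<in>T. g j powr (-3/2))"
    using T by (intro arc_fraction_le_large_regions[OF blue(2,1,3) sorted(2) n]) auto
  have cube: "(2 * real n) powr (3/2) * (2 * real n) powr (3/2) = 8 * real n ^ 3"
  proof -
    have "(2 * real n) powr (3/2) * (2 * real n) powr (3/2) = (2 * real n) powr real (3::nat)"
      by (simp flip: powr_add)
    also have "\<dots> = (2 * real n) ^ 3" using n by (intro powr_realpow) simp
    finally show ?thesis by simp
  qed
  have "arc_fraction R x k * arc_fraction ({1..2*n} - R) y l
      \<le> (2 * (2 * real n) powr (3/2) * (32 powr (3/2)) ^ (length x + 1) * (\<Prod>i\<in>S. f i powr (-3/2)))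
        * (2 * (2 * real n) powr (3/2) * (32 powr (3/2)) ^ (length y + 1) * (\<Prod>j\<in>T. g j powr (-3/2)))"
    using arc_fraction_nonneg_le_1[OF blue(2), of y l]
    by (intro mult_mono[OF red_bound blue_bound]) (auto intro!: prod_nonneg mult_nonneg_nonneg)
  also have "\<dots> = 4 * ((2 * real n) powr (3/2) * (2 * real n) powr (3/2))
        * (32 powr (3/2)) ^ (length x + 1) * (32 powr (3/2)) ^ (length y + 1)
        * (\<Prod>i\<in>S. f i powr (-3/2)) * (\<Prod>j\<in>T. g j powr (-3/2))"
    by (simp add: algebra_simps)
  finally show ?thesis unfolding cube R_def by (simp add: algebra_simps)
qed

lemma prod_powr_lower:
  assumes fS: "finite S" and cS: "card S \<le> K" and h: "\<forall>i\<in>S. 0 < h i \<and> h i \<le> 2 * real n" and n1: "n \<ge> 1"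
  shows "((2 * real n) powr (-3/2)) ^ K \<le> (\<Prod>i\<in>S. h i powr (-3/2))"
proof -
  have b1: "(2 * real n) powr (-3/2) \<le> 1"
  proof -
    have "(2 * real n) powr (-3/2) \<le> (2 * real n) powr 0" using n1 by (intro powr_mono) auto
    then show ?thesis using n1 by simp
  qed
  have b0: "0 \<le> (2 * real n) powr (-3/2)" by simp
  have "((2 * real n) powr (-3/2)) ^ K \<le> ((2 * real n) powr (-3/2)) ^ card S"
    by (rule power_decreasing[OF cS b0 b1])
  also have "\<dots> = (\<Prod>i\<in>S. (2 * real n) powr (-3/2))" by simp
  also have "\<dots> \<le> (\<Prod>i\<in>S. h i powr (-3/2))"
  proof (rule prod_mono)
    fix i assume "i \<in> S"
    then have "0 < h i" "h i \<le> 2 * real n" using h by auto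
    then show "0 \<le> (2 * real n) powr (-3/2) \<and> (2 * real n) powr (-3/2) \<le> h i powr (-3/2)"
      by (auto intro: powr_mono2')
  qed
  finally show ?thesis .
qed

lemma inverse_power_le_prod_powr:
  fixes f g :: "nat \<Rightarrow> real"
  assumes n: "n \<ge> 1"
    and S: "finite S" "card S \<le> s + 1" "\<forall>i\<in>S. 0 < f i \<and> f i \<le> 2 * real n"
    and T: "finite T" "card T \<le> t + 1" "\<forall>j\<in>T. 0 < g j \<and> g j \<le> 2 * real n"
  shows "real n powr (- 2 * real (s + t))
    \<le> 2 powr (3/2 * real (s + t + 2)) * real n ^ 3 * (\<Prod>i\<in>S. f i powr (-3/2)) * (\<Prod>j\<in>T. g j powr (-3/2))"
proof -
  define m where "m = s + t + 2"
  define q where "q = (2 * real n) powr (-3/2)"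
  define PS where "PS = (\<Prod>i\<in>S. f i powr (-3/2))"
  define PT where "PT = (\<Prod>j\<in>T. g j powr (-3/2))"
  have "q ^ m = q ^ (s + 1) * q ^ (t + 1)" unfolding m_def by (simp add: power_add[symmetric])
  also have "\<dots> \<le> PS * PT"
    using prod_powr_lower[OF S(1,2,3) n] prod_powr_lower[OF T(1,2,3) n]
    unfolding PS_def PT_def q_def by (intro mult_mono) (auto intro!: prod_nonneg)
  finally have "q ^ m \<le> PS * PT" .
  moreover have "q ^ m = 2 powr (-3/2 * real m) * real n powr (-3/2 * real m)"
    unfolding q_def using n by (simp add: powr_realpow[symmetric] powr_powr powr_mult)
  ultimately have key: "2 powr (-3/2 * real m) * real n powr (-3/2 * real m) \<le> PS * PT" by simp
  have "real n powr (- 2 * real (s + t)) \<le> real n powr (-3/2 * real (s + t))"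
  proof (rule powr_mono)
    have "0 \<le> real (s + t)" by simp
    then show "- 2 * real (s + t) \<le> -3/2 * real (s + t)" by linarith
  qed (use n in simp)
  also have "real n powr (-3/2 * real (s + t)) = real n ^ 3 * real n powr (-3/2 * real m)"
  proof -
    have "real n ^ 3 * real n powr (-3/2 * real m) = real n powr real (3::nat) * real n powr (-3/2 * real m)"
      using powr_realpow[of "real n" 3] n by simp
    also have "\<dots> = real n powr (real (3::nat) + -3/2 * real m)" by (rule powr_add[symmetric])
    also have "real (3::nat) + -3/2 * real m = -3/2 * real (s + t)" unfolding m_def by (simp add: field_simps)
    finally show ?thesis by simp
  qed
  also have "\<dots> = 2 powr (3/2 * real m) * (real n ^ 3 * (2 powr (-3/2 * real m) * real n powr (-3/2 * real m)))"
    by (simp add: powr_minus field_simps)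
  also have "\<dots> \<le> 2 powr (3/2 * real m) * (real n ^ 3 * (PS * PT))"
    using key by (intro mult_left_mono) auto
  finally show ?thesis unfolding m_def PS_def PT_def by (simp add: mult.assoc)
qed

definition beta :: "nat \<Rightarrow> nat \<Rightarrow> real" where
  "beta s t = 32 * (32 powr (3/2)) ^ (s + 1) * (32 powr (3/2)) ^ (t + 1)
     + real (s + t + 2) * (4/3) * 2 powr (3/2 * real (s + t + 2))"

lemma beta_pos: "beta s t > 0"
  unfolding beta_def by (intro add_pos_pos) auto

lemma prob_event_A_le_union_bound:
  fixes f g :: "nat \<Rightarrow> real"
  assumes n: "n \<ge> 1" and sorted: "sorted_wrt (<) x" "sorted_wrt (<) y"
    and S: "S \<subseteq> {0..length x}" "\<forall>i\<in>S. 0 < f i"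
    and T: "T \<subseteq> {0..length y}" "\<forall>j\<in>T. 0 < g j"
  shows "measure_pmf.prob (CP n) (event_A n x k y l)
    \<le> 32 * (32 powr (3/2)) ^ (length x + 1) * (32 powr (3/2)) ^ (length y + 1) * real n ^ 3
        * (\<Prod>i\<in>S. f i powr (-3/2)) * (\<Prod>j\<in>T. g j powr (-3/2))
      + (\<Sum>i\<in>S. real (card {C \<in> Pow {1..<2*n}. 16 * real (card (C \<inter> free_points n x k y l i)) < f i})
          / 2 ^ card {1..<2*n})
      + (\<Sum>j\<in>T. real (card {C \<in> Pow {1..<2*n}.
            16 * real (card (({1..<2*n} - C) \<inter> free_points n y l x k j)) < g j}) / 2 ^ card {1..<2*n})"
proof -
  define U where "U = {1..<2*n}"
  define good where "good \<iota> C = (case \<iota> of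
      Inl i \<Rightarrow> \<not> 16 * real (card (C \<inter> free_points n x k y l i)) < f i
    | Inr j \<Rightarrow> \<not> 16 * real (card ((U - C) \<inter> free_points n y l x k j)) < g j)" for \<iota> C
  define \<phi> where "\<phi> C = arc_fraction (red_points n C) x k * arc_fraction ({1..2*n} - red_points n C) y l" for C
  define B where "B = 32 * (32 powr (3/2)) ^ (length x + 1) * (32 powr (3/2)) ^ (length y + 1) * real n ^ 3
    * (\<Prod>i\<in>S. f i powr (-3/2)) * (\<Prod>j\<in>T. g j powr (-3/2))"
  have "finite S" "finite T" using S(1) T(1) finite_subset by blast+
  have "0 \<le> B" unfolding B_def by (intro mult_nonneg_nonneg prod_nonneg) auto
  have "(\<Sum>C\<in>Pow U. \<phi> C) \<le> real (card (Pow U)) * B + (\<Sum>\<iota>\<in>S <+> T. real (card {C \<in> Pow U. \<not> good \<iota> C}))"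
  proof (rule average_le_union_bound)
    fix C assume C: "C \<in> Pow U"
    then show "0 \<le> \<phi> C \<and> \<phi> C \<le> 1"
      using arc_fraction_nonneg_le_1 red_points_properties[of C n] unfolding \<phi>_def U_def
      by (simp add: mult_le_one)
    assume good_C: "\<forall>\<iota>\<in>S <+> T. good \<iota> C"
    have "\<forall>i\<in>S. 0 < f i \<and> f i \<le> 16 * real (card (C \<inter> free_points n x k y l i))"
      using good_C S(2) unfolding good_def by force
    moreover have "\<forall>j\<in>T. 0 < g j \<and> g j \<le> 16 * real (card (({1..<2*n} - C) \<inter> free_points n y l x k j))"
      using good_C T(2) unfolding good_def U_def by force
    ultimately show "\<phi> C \<le> B"
      unfolding \<phi>_def B_def using S(1) T(1) C unfolding U_def
      by (intro arc_fraction_product_le[OF _ n sorted]) auto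
  qed (use \<open>finite S\<close> \<open>finite T\<close> \<open>0 \<le> B\<close> in \<open>auto simp: U_def\<close>)
  then have "(\<Sum>C\<in>Pow U. \<phi> C) / 2 ^ card U
      \<le> (real (card (Pow U)) * B + (\<Sum>\<iota>\<in>S <+> T. real (card {C \<in> Pow U. \<not> good \<iota> C}))) / 2 ^ card U"
    by (intro divide_right_mono) auto
  also have "\<dots> = B + (\<Sum>\<iota>\<in>S <+> T. real (card {C \<in> Pow U. \<not> good \<iota> C}) / 2 ^ card U)"
    by (simp add: U_def card_Pow add_divide_distrib sum_divide_distrib)
  finally show ?thesis
    using prob_event_A_le_average[of n x k y l] \<open>finite S\<close> \<open>finite T\<close>
    unfolding \<phi>_def B_def good_def U_def by (simp add: card_Pow sum.Plus add.assoc)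
qed

lemma prob_event_A_le:
  fixes n :: nat and x k y l :: "nat list"
  defines "L \<equiv> 16 * real (length x + length y) * ln (real n)"
  assumes n: "n \<ge> 2" and x: "length x > 0"
    and sorted: "sorted_wrt (<) x" "sorted_wrt (<) y"
    and bounded: "\<forall>i<length x. x!i + k!i \<le> 2*n" "\<forall>j<length y. y!j + l!j \<le> 2*n"
  shows "measure_pmf.prob (CP n) (event_A n x k y l)
    \<le> beta (length x) (length y) * real n ^ 3
      * (\<Prod>i\<in>{i\<in>{0..length x}. real (free_count n x k y l i) \<ge> L}. real (free_count n x k y l i) powr (-3/2))
      * (\<Prod>j\<in>{j\<in>{0..length y}. real (free_count n y l x k j) \<ge> L}. real (free_count n y l x k j) powr (-3/2))"
proof -
  define s t where "s = length x" and "t = length y"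
  define f g where "f i = real (free_count n x k y l i)" and "g j = real (free_count n y l x k j)" for i j
  define S T where "S = {i\<in>{0..s}. f i \<ge> L}" and "T = {j\<in>{0..t}. g j \<ge> L}"
  define PS PT where "PS = (\<Prod>i\<in>S. f i powr (-3/2))" and "PT = (\<Prod>j\<in>T. g j powr (-3/2))"
  define \<epsilon> where "\<epsilon> = 4/3 * real n powr (- 2 * real (s + t))"
  have n1: "n \<ge> 1" and st: "1 \<le> s + t" using n x unfolding s_def t_def by linarith+
  have "ln (real n) > 0" "0 < 16 * real (s + t)" using n st by auto
  then have "L > 0" unfolding L_def s_def t_def by simp
  have f: "f i = real (card (free_points n x k y l i))" and g: "g j = real (card (free_points n y l x k j))" for i j
    unfolding f_def g_def by (simp_all add: free_count_eq_card)
  have FX: "free_points n x k y l i \<subseteq> {1..2*n}" if "i \<le> s" for i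
    using region_subset[OF bounded(1)] that unfolding free_points_def s_def by auto
  have FY: "free_points n y l x k j \<subseteq> {1..2*n}" if "j \<le> t" for j
    using region_subset[OF bounded(2)] that unfolding free_points_def t_def by auto
  have S: "finite S" "S \<subseteq> {0..s}" "\<forall>i\<in>S. 0 < f i \<and> f i \<le> 2 * real n" "\<forall>i\<in>S. L \<le> f i"
    using \<open>L > 0\<close> card_mono[OF _ FX] unfolding S_def f by fastforce+
  have T: "finite T" "T \<subseteq> {0..t}" "\<forall>j\<in>T. 0 < g j \<and> g j \<le> 2 * real n" "\<forall>j\<in>T. L \<le> g j"
    using \<open>L > 0\<close> card_mono[OF _ FY] unfolding T_def g by fastforce+
  have eps_sum: "(\<Sum>i\<in>S. \<epsilon>) + (\<Sum>j\<in>T. \<epsilon>) \<le> real (s + t + 2) * \<epsilon>"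
  proof -
    have "card S + card T \<le> s + t + 2" using card_mono[OF _ S(2)] card_mono[OF _ T(2)] by simp
    then have "real (card S + card T) * \<epsilon> \<le> real (s + t + 2) * \<epsilon>"
      unfolding \<epsilon>_def by (intro mult_right_mono) auto
    then show ?thesis by (simp add: algebra_simps)
  qed
  have few_red: "real (card {C \<in> Pow {1..<2*n}. 16 * real (card (C \<inter> free_points n x k y l i)) < f i})
      / 2 ^ card {1..<2*n} \<le> \<epsilon>" if "i \<in> S" for i
  proof -
    have "i \<le> s" "L \<le> f i" using that S(2,4) by auto
    then show ?thesis
      using fraction_few_red_le[OF n FX[OF \<open>i \<le> s\<close>] st] unfolding \<epsilon>_def L_def f s_def t_def by simp
  qed
  have few_blue: "real (card {C \<in> Pow {1..<2*n}.
      16 * real (card (({1..<2*n} - C) \<inter> free_points n y l x k j)) < g j}) / 2 ^ card {1..<2*n} \<le> \<epsilon>"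
    if "j \<in> T" for j
  proof -
    have "j \<le> t" "L \<le> g j" using that T(2,4) by auto
    then show ?thesis
      using fraction_few_blue_le[OF n FY[OF \<open>j \<le> t\<close>] st] unfolding \<epsilon>_def L_def g s_def t_def by simp
  qed
  have "S \<subseteq> {0..length x}" "T \<subseteq> {0..length y}" using S(2) T(2) by (simp_all add: s_def t_def)
  then have "measure_pmf.prob (CP n) (event_A n x k y l)
      \<le> 32 * (32 powr (3/2)) ^ (s + 1) * (32 powr (3/2)) ^ (t + 1) * real n ^ 3 * PS * PT
        + (\<Sum>i\<in>S. \<epsilon>) + (\<Sum>j\<in>T. \<epsilon>)"
    using prob_event_A_le_union_bound[OF n1 sorted, of S f T g k l] S(3) T(3)
      sum_mono[OF few_red, of S] sum_mono[OF few_blue, of T]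
    unfolding PS_def PT_def s_def t_def by fastforce
  also have "\<dots> \<le> 32 * (32 powr (3/2)) ^ (s + 1) * (32 powr (3/2)) ^ (t + 1) * real n ^ 3 * PS * PT
        + real (s + t + 2) * \<epsilon>"
    using eps_sum by linarith
  also have "\<dots> \<le> 32 * (32 powr (3/2)) ^ (s + 1) * (32 powr (3/2)) ^ (t + 1) * real n ^ 3 * PS * PT
        + real (s + t + 2) * (4/3 * (2 powr (3/2 * real (s + t + 2)) * real n ^ 3 * PS * PT))"
    using inverse_power_le_prod_powr[OF n1 S(1) _ S(3) T(1) _ T(3), of s t]
      card_mono[OF _ S(2)] card_mono[OF _ T(2)]
    unfolding \<epsilon>_def PS_def PT_def by (intro add_left_mono mult_left_mono) auto
  also have "\<dots> = beta s t * real n ^ 3 * PS * PT"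
    unfolding beta_def by (simp add: algebra_simps)
  finally show ?thesis
    unfolding PS_def PT_def S_def T_def f_def g_def s_def t_def .
qed

theorem lemma4p1:
  "\<forall>s t :: nat. 0 < s \<and> 0 < t \<longrightarrow>
     (\<exists>\<beta> :: real. \<beta> > 0 \<and> (\<exists>N :: int. \<forall>n :: nat. int n \<ge> N \<longrightarrow>
       (\<forall>x k y l. length x = s \<and> length k = s \<and> length y = t \<and> length l = t \<and>
          sorted_wrt (<) x \<and> sorted_wrt (<) y \<and>
          (\<forall>i<s. 1 \<le> x!i \<and> 1 \<le> k!i \<and> x!i + k!i \<le> 2*n) \<and>
          (\<forall>j<t. 1 \<le> y!j \<and> 1 \<le> l!j \<and> y!j + l!j \<le> 2*n) \<and>
          valid_quad n x k y l \<longrightarrow>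
          measure_pmf.prob (CP n) (event_A n x k y l)
            \<le> \<beta> * real n ^ 3
              * (\<Prod>i\<in>{i\<in>{0..s}. real (free_count n x k y l i) \<ge> 16 * real (s + t) * ln (real n)}.
                   real (free_count n x k y l i) powr (-3/2))
              * (\<Prod>j\<in>{j\<in>{0..t}. real (free_count n y l x k j) \<ge> 16 * real (s + t) * ln (real n)}.
                   real (free_count n y l x k j) powr (-3/2)))))"
proof (intro allI impI, goal_cases)
  case (1 s t)
  show ?case
  proof (intro exI[of _ "beta s t"] conjI beta_pos exI[of _ 2] allI impI, goal_cases)
    case (1 n x k y l)
    with \<open>0 < s \<and> 0 < t\<close> have "2 \<le> n" "0 < length x" "sorted_wrt (<) x" "sorted_wrt (<) y"
      "\<forall>i<length x. x!i + k!i \<le> 2*n" "\<forall>j<length y. y!j + l!j \<le> 2*n"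
      "length x = s" "length y = t"
      by auto
    then show ?case using prob_event_A_le[where n = n and x = x and k = k and y = y and l = l] by simp
  qed
qed

end
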